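(* Let $\Omega\subset\mathbb{R}^n$ be a bounded open set with $C^2$ boundary. Let $x_i\in\overline\Omega$ with $x_i\to x$ and let $\gamma\in\Gamma$ with $\gamma(0)=x$. Then there exist $\gamma_i\in\Gamma$ with $\gamma_i(0)=x_i$ such that: (i) $\gamma_i\to\gamma$ uniformly on $[0,T]$; (ii) $\dot\gamma_i\to\dot\gamma$ almost everywhere on $[0,T]$; (iii) there is a constant $C\ge 0$ such that $|\dot\gamma_i(t)|\le C|\dot\gamma(t)|$ for all $i\ge1$ and a.e. $t\in[0,T]$.
   Context: $\Gamma=\{\gamma\in AC(0,T;\mathbb{R}^n):\gamma(t)\in\overline\Omega\ \forall t\in[0,T]\}$, where $AC(0,T;\mathbb{R}^n)$ is the space of absolutely continuous functions $[0,T]\to\mathbb{R}^n$ with the uniform metric. *)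

theory Defs
  imports "HOL-Analysis.Analysis"
begin

definition absolutely_continuous_on_interval ::
  "real \<Rightarrow> real \<Rightarrow> (real \<Rightarrow> 'a::real_normed_vector) \<Rightarrow> bool" where
  "absolutely_continuous_on_interval a b f \<longleftrightarrow>
    (\<forall>\<epsilon>>0. \<exists>\<delta>>0. \<forall>D::(real \<times> real) set.
       finite D \<and>
       (\<forall>(u,v)\<in>D. a \<le> u \<and> u \<le> v \<and> v \<le> b) \<and>
       (\<forall>(u,v)\<in>D. \<forall>(u',v')\<in>D. (u,v) \<noteq> (u',v') \<longrightarrow> {u<..<v} \<inter> {u'<..<v'} = {}) \<and>
       (\<Sum>(u,v)\<in>D. v - u) < \<delta>
       \<longrightarrow> (\<Sum>(u,v)\<in>D. norm (f v - f u)) < \<epsilon>)"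

definition Gamma :: "real \<Rightarrow> 'a::euclidean_space set \<Rightarrow> (real \<Rightarrow> 'a) set" where
  "Gamma T \<Omega> = {\<gamma>. absolutely_continuous_on_interval 0 T \<gamma> \<and> (\<forall>t\<in>{0..T}. \<gamma> t \<in> closure \<Omega>)}"

definition C2_on :: "'a::euclidean_space set \<Rightarrow> ('a \<Rightarrow> real) \<Rightarrow> bool" where
  "C2_on U \<phi> \<longleftrightarrow>
    (\<exists>grad :: 'a \<Rightarrow> 'a. \<exists>H :: 'a \<Rightarrow> 'a \<Rightarrow> 'a.
       (\<forall>x\<in>U. (\<phi> has_derivative (\<lambda>h. grad x \<bullet> h)) (at x)) \<and>
       (\<forall>x\<in>U. (grad has_derivative H x) (at x)) \<and>
       (\<forall>v. continuous_on U (\<lambda>x. H x v)))"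

definition C2_boundary :: "'a::euclidean_space set \<Rightarrow> bool" where
  "C2_boundary \<Omega> \<longleftrightarrow>
    (\<forall>p\<in>frontier \<Omega>. \<exists>r>0. \<exists>\<phi>. C2_on (ball p r) \<phi> \<and>
       (\<forall>x\<in>ball p r. \<forall>D. (\<phi> has_derivative D) (at x) \<longrightarrow> D \<noteq> (\<lambda>h. 0)) \<and>
       \<Omega> \<inter> ball p r = {x\<in>ball p r. \<phi> x < 0})"

end

theory Submission
  imports Defs
begin

text \<open>For every small \<open>v\<close> with \<open>x + v \<in> closure \<Omega>\<close> there is a \<open>C\<^sup>1\<close> map \<open>\<Phi>\<^sub>v\<close> of the whole
  space with \<open>\<Phi>\<^sub>v x = x + v\<close> and \<open>\<Phi>\<^sub>v ` closure \<Omega> \<subseteq> closure \<Omega>\<close> which is \<open>O(|v|)\<close>-close to the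
  identity together with its derivative. Then \<open>\<gamma>\<^sub>i = \<Phi>\<^sub>v \<circ> \<gamma>\<close> with \<open>v = x\<^sub>i - x\<close> works: such a map is a
  bi-Lipschitz diffeomorphism, so it preserves absolute continuity, and \<open>\<gamma>\<^sub>i\<close> is differentiable
  exactly where \<open>\<gamma>\<close> is, with derivative \<open>D\<Phi>(\<gamma> t) \<gamma>'(t) = \<gamma>'(t) + O(|x\<^sub>i - x| |\<gamma>'(t)|)\<close>.

  At an interior point \<open>\<Phi>\<^sub>v\<close> is the translation by \<open>v\<close> damped by a bump. At a boundary point,
  with a local defining function \<open>\<phi>\<close>, the damped translation \<open>w\<close> is followed by a push along
  \<open>n = \<nabla>\<phi>(x)\<close>, of size chosen so that \<open>\<phi> \<circ> \<Phi>\<^sub>v \<le> 0\<close> wherever \<open>\<phi> \<le> 0\<close>; the \<open>C\<^sup>2\<close>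
  regularity of \<open>\<phi>\<close> controls the second-order errors.\<close>

section \<open>A bump function\<close>

lemma has_real_derivative_max0_power2:
  "((\<lambda>u. (max 0 u)\<^sup>2) has_real_derivative 2 * max 0 u) (at (u::real))"
proof (cases "u = 0")
  case True
  have "((\<lambda>y. ((max 0 y)\<^sup>2 - (max 0 0)\<^sup>2) / (y - 0)) \<longlongrightarrow> 0) (at (0::real))"
  proof (rule Lim_null_comparison)
    have "norm (((max 0 y)\<^sup>2 - (max 0 0)\<^sup>2) / (y - 0)) \<le> \<bar>y\<bar>" for y :: real
      by (cases "y \<le> 0") (auto simp: power2_eq_square)
    then show "\<forall>\<^sub>F y in at 0. norm (((max 0 y)\<^sup>2 - (max 0 0)\<^sup>2) / (y - 0)) \<le> \<bar>y\<bar>"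
      by (simp add: always_eventually)
    show "((\<lambda>y. \<bar>y\<bar>) \<longlongrightarrow> 0) (at (0::real))"
      using tendsto_rabs[OF tendsto_ident_at[of "0::real" UNIV]] by simp
  qed
  then show ?thesis unfolding True has_field_derivative_iff by simp
next
  case False
  consider "u > 0" | "u < 0" using False by linarith
  then show ?thesis
  proof cases
    case 1
    have "((\<lambda>u. u\<^sup>2) has_real_derivative 2 * max 0 u) (at u)"
      using 1 by (auto intro!: derivative_eq_intros)
    then show ?thesis
      by (rule has_field_derivative_transform_within_open[of _ _ _ "{0<..}"]) (use 1 in auto)
  next
    case 2
    have "((\<lambda>u. 0) has_real_derivative 2 * max 0 u) (at u)"
      using 2 by (auto intro!: derivative_eq_intros)
    then show ?thesis
      by (rule has_field_derivative_transform_within_open[of _ _ _ "{..<0}"]) (use 2 in auto)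
  qed
qed

definition bump :: "'a::real_inner \<Rightarrow> real \<Rightarrow> 'a \<Rightarrow> real" where
  "bump c \<rho> y = (max 0 (1 - (norm (y - c))\<^sup>2 / \<rho>\<^sup>2))\<^sup>2"

definition bump_derivative :: "'a::real_inner \<Rightarrow> real \<Rightarrow> 'a \<Rightarrow> 'a \<Rightarrow> real" where
  "bump_derivative c \<rho> y h = - 4 * max 0 (1 - (norm (y - c))\<^sup>2 / \<rho>\<^sup>2) * ((y - c) \<bullet> h) / \<rho>\<^sup>2"

lemma bump_has_derivative: "(bump c \<rho> has_derivative bump_derivative c \<rho> y) (at y within S)"
proof -
  define s where "s = inverse (\<rho>\<^sup>2)"
  have inner: "((\<lambda>y. 1 - s * ((y - c) \<bullet> (y - c))) has_derivative
      (\<lambda>h. - (s * (h \<bullet> (y - c) + (y - c) \<bullet> h)))) (at y within S)"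
    by (auto intro!: derivative_eq_intros)
  have "((\<lambda>u. (max 0 u)\<^sup>2) \<circ> (\<lambda>y. 1 - s * ((y - c) \<bullet> (y - c))) has_derivative
     (\<lambda>k. k * (2 * max 0 (1 - s * ((y - c) \<bullet> (y - c))))) \<circ> (\<lambda>h. - (s * (h \<bullet> (y - c) + (y - c) \<bullet> h))))
     (at y within S)"
    unfolding o_def
    by (rule has_derivative_compose[OF inner],
        rule has_derivative_eq_rhs[OF has_real_derivative_max0_power2[unfolded has_field_derivative_def]])
       (auto simp: fun_eq_iff)
  moreover have "bump c \<rho> = (\<lambda>u. (max 0 u)\<^sup>2) \<circ> (\<lambda>y. 1 - s * ((y - c) \<bullet> (y - c)))"
    by (auto simp: bump_def fun_eq_iff power2_norm_eq_inner s_def divide_inverse mult.commute)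
  moreover have "bump_derivative c \<rho> y = (\<lambda>k. k * (2 * max 0 (1 - s * ((y - c) \<bullet> (y - c))))) \<circ>
      (\<lambda>h. - (s * (h \<bullet> (y - c) + (y - c) \<bullet> h)))"
    by (auto simp: bump_derivative_def fun_eq_iff power2_norm_eq_inner s_def divide_inverse
        inner_commute mult.commute mult.left_commute)
  ultimately show ?thesis by simp
qed

lemma bump_centre: "bump c \<rho> c = 1"
  by (simp add: bump_def)

lemma bump_nonneg: "0 \<le> bump c \<rho> y"
  by (simp add: bump_def)

lemma bump_le_one: "bump c \<rho> y \<le> 1"
  unfolding bump_def by (rule power_le_one) auto

lemma bump_outside:
  assumes "\<rho> > 0" "norm (y - c) \<ge> \<rho>"
  shows "bump c \<rho> y = 0" "bump_derivative c \<rho> y = (\<lambda>h. 0)"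
proof -
  have "\<rho>\<^sup>2 \<le> (norm (y - c))\<^sup>2" using assms by (simp add: power_mono)
  then have "max 0 (1 - (norm (y - c))\<^sup>2 / \<rho>\<^sup>2) = 0" using assms by simp
  then show "bump c \<rho> y = 0" "bump_derivative c \<rho> y = (\<lambda>h. 0)"
    by (auto simp: bump_def bump_derivative_def fun_eq_iff)
qed

lemma abs_bump_derivative_le:
  assumes "\<rho> > 0"
  shows "\<bar>bump_derivative c \<rho> y h\<bar> \<le> 4 / \<rho> * norm h"
proof (cases "norm (y - c) < \<rho>")
  case True
  let ?m = "max 0 (1 - (norm (y - c))\<^sup>2 / \<rho>\<^sup>2)"
  have m: "0 \<le> ?m" "?m \<le> 1" by auto
  have "\<bar>(y - c) \<bullet> h\<bar> \<le> norm (y - c) * norm h" by (rule Cauchy_Schwarz_ineq2)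
  also have "\<dots> \<le> \<rho> * norm h" using True by (simp add: mult_right_mono)
  finally have cs: "\<bar>(y - c) \<bullet> h\<bar> \<le> \<rho> * norm h" .
  have "\<bar>bump_derivative c \<rho> y h\<bar> = 4 * ?m * \<bar>(y - c) \<bullet> h\<bar> / \<rho>\<^sup>2"
    using m by (simp add: bump_derivative_def abs_mult)
  also have "\<dots> \<le> 4 * 1 * (\<rho> * norm h) / \<rho>\<^sup>2"
    using m cs assms by (intro divide_right_mono mult_mono) auto
  also have "\<dots> = 4 / \<rho> * norm h" using assms by (simp add: power2_eq_square)
  finally show ?thesis .
next
  case False
  then show ?thesis using bump_outside[of \<rho> y c] assms by simp
qed

lemma one_minus_bump_le:
  assumes "\<rho> > 0"
  shows "1 - bump c \<rho> y \<le> 2 / \<rho> * norm (y - c)"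
proof (cases "norm (y - c) < \<rho>")
  case True
  let ?s = "(norm (y - c))\<^sup>2 / \<rho>\<^sup>2"
  have s: "?s \<le> norm (y - c) / \<rho>"
  proof -
    have "(norm (y - c))\<^sup>2 \<le> norm (y - c) * \<rho>"
      using True by (simp add: power2_eq_square mult_left_mono)
    then show ?thesis using assms by (simp add: divide_simps power2_eq_square)
  qed
  have "?s \<le> 1" using s True assms by (simp add: divide_le_eq_1)
  then have "bump c \<rho> y = (1 - ?s)\<^sup>2" by (simp add: bump_def)
  then have "1 - bump c \<rho> y = 2 * ?s - ?s\<^sup>2" by (simp add: power2_eq_square algebra_simps)
  also have "\<dots> \<le> 2 * ?s" by simp
  also have "\<dots> \<le> 2 / \<rho> * norm (y - c)" using s by simp
  finally show ?thesis .
next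
  case False
  then have "1 \<le> norm (y - c) / \<rho>" using assms by simp
  then show ?thesis using bump_outside[of \<rho> y c] assms False by simp
qed

lemma half_radius_lt_norm_if_bump_lt:
  assumes "\<rho> > 0" "bump c \<rho> y < 1/4"
  shows "\<rho> / 2 < norm (y - c)"
proof (rule ccontr)
  assume "\<not> ?thesis"
  then have "(norm (y - c))\<^sup>2 \<le> (\<rho>/2)\<^sup>2" by (simp add: power_mono)
  then have s: "(norm (y - c))\<^sup>2 / \<rho>\<^sup>2 \<le> 1/4"
    using assms by (simp add: divide_simps power2_eq_square)
  then have "bump c \<rho> y = (1 - (norm (y - c))\<^sup>2 / \<rho>\<^sup>2)\<^sup>2" by (simp add: bump_def)
  also have "\<dots> \<ge> (3/4)\<^sup>2" using s by (intro power_mono) auto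
  finally show False using assms by (simp add: power2_eq_square)
qed

section \<open>Maps close to the identity\<close>

lemma absolutely_continuous_on_interval_const: "absolutely_continuous_on_interval a b (\<lambda>t. c)"
  unfolding absolutely_continuous_on_interval_def by (auto intro: exI[of _ 1])

lemma absolutely_continuous_on_interval_compose_lipschitz:
  assumes ac: "absolutely_continuous_on_interval a b \<gamma>"
    and L: "L \<ge> 0" "\<And>u w. norm (\<Phi> u - \<Phi> w) \<le> L * norm (u - w)"
  shows "absolutely_continuous_on_interval a b (\<Phi> \<circ> \<gamma>)"
  unfolding absolutely_continuous_on_interval_def
proof (intro allI impI)
  fix e :: real assume e: "e > 0"
  then have "e / (L + 1) > 0" using L by simp
  then obtain d where d: "d > 0" and dd: "\<forall>D::(real \<times> real) set.
       finite D \<and>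
       (\<forall>(u,v)\<in>D. a \<le> u \<and> u \<le> v \<and> v \<le> b) \<and>
       (\<forall>(u,v)\<in>D. \<forall>(u',v')\<in>D. (u,v) \<noteq> (u',v') \<longrightarrow> {u<..<v} \<inter> {u'<..<v'} = {}) \<and>
       (\<Sum>(u,v)\<in>D. v - u) < d
       \<longrightarrow> (\<Sum>(u,v)\<in>D. norm (\<gamma> v - \<gamma> u)) < e / (L + 1)"
    using ac unfolding absolutely_continuous_on_interval_def by meson
  show "\<exists>d>0. \<forall>D::(real \<times> real) set.
       finite D \<and>
       (\<forall>(u,v)\<in>D. a \<le> u \<and> u \<le> v \<and> v \<le> b) \<and>
       (\<forall>(u,v)\<in>D. \<forall>(u',v')\<in>D. (u,v) \<noteq> (u',v') \<longrightarrow> {u<..<v} \<inter> {u'<..<v'} = {}) \<and>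
       (\<Sum>(u,v)\<in>D. v - u) < d
       \<longrightarrow> (\<Sum>(u,v)\<in>D. norm ((\<Phi> \<circ> \<gamma>) v - (\<Phi> \<circ> \<gamma>) u)) < e"
  proof (intro exI[of _ d] conjI allI impI)
    fix D :: "(real \<times> real) set"
    assume "finite D \<and>
       (\<forall>(u,v)\<in>D. a \<le> u \<and> u \<le> v \<and> v \<le> b) \<and>
       (\<forall>(u,v)\<in>D. \<forall>(u',v')\<in>D. (u,v) \<noteq> (u',v') \<longrightarrow> {u<..<v} \<inter> {u'<..<v'} = {}) \<and>
       (\<Sum>(u,v)\<in>D. v - u) < d"
    then have small: "(\<Sum>(u,v)\<in>D. norm (\<gamma> v - \<gamma> u)) < e / (L + 1)" using dd by blast
    have "(\<Sum>(u,v)\<in>D. norm ((\<Phi> \<circ> \<gamma>) v - (\<Phi> \<circ> \<gamma>) u)) \<le> (\<Sum>(u,v)\<in>D. L * norm (\<gamma> v - \<gamma> u))"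
      by (intro sum_mono) (auto simp: L)
    also have "\<dots> = L * (\<Sum>(u,v)\<in>D. norm (\<gamma> v - \<gamma> u))"
      by (simp add: sum_distrib_left case_prod_unfold)
    also have "\<dots> \<le> L * (e / (L + 1))" using small L by (intro mult_left_mono) auto
    also have "\<dots> < e" using e L by (simp add: field_simps)
    finally show "(\<Sum>(u,v)\<in>D. norm ((\<Phi> \<circ> \<gamma>) v - (\<Phi> \<circ> \<gamma>) u)) < e" .
  qed (use d in auto)
qed

lemma onorm_inner_le:
  fixes g :: "'a::{real_inner,perfect_space}"
  shows "onorm (\<lambda>h. g \<bullet> h) \<le> norm g"
  by (rule onorm_le) (simp add: Cauchy_Schwarz_ineq2)

locale near_identity =
  fixes \<Phi> :: "'a::euclidean_space \<Rightarrow> 'a" and D :: "'a \<Rightarrow> 'a \<Rightarrow> 'a" and \<delta> :: real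
  assumes has_derivative: "\<And>y. (\<Phi> has_derivative D y) (at y)"
    and derivative_close: "\<And>y h. norm (D y h - h) \<le> \<delta> * norm h"
    and small: "0 \<le> \<delta>" "\<delta> \<le> 1/2"
begin

lemma linear_derivative: "linear (D y)"
  using has_derivative[of y] has_derivative_linear by blast

lemma norm_derivative_le: "norm (D y h) \<le> (1 + \<delta>) * norm h"
  using norm_triangle_sub[of "D y h" h] derivative_close[of y h] by (simp add: algebra_simps)

lemma lipschitz: "norm (\<Phi> a - \<Phi> b) \<le> (1 + \<delta>) * norm (a - b)"
proof (rule differentiable_bound[of UNIV])
  show "\<And>x. x \<in> UNIV \<Longrightarrow> (\<Phi> has_derivative D x) (at x within UNIV)" using has_derivative by simp
  show "\<And>x. x \<in> UNIV \<Longrightarrow> onorm (D x) \<le> 1 + \<delta>" by (rule onorm_le) (simp add: norm_derivative_le)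
qed auto

lemma displacement_lipschitz: "norm ((\<Phi> a - a) - (\<Phi> b - b)) \<le> \<delta> * norm (a - b)"
proof (rule differentiable_bound[of UNIV "\<lambda>y. \<Phi> y - y" "\<lambda>y h. D y h - h"])
  show "\<And>x. x \<in> UNIV \<Longrightarrow> ((\<lambda>y. \<Phi> y - y) has_derivative (\<lambda>h. D x h - h)) (at x within UNIV)"
    using has_derivative by (auto intro!: derivative_eq_intros)
  show "\<And>x. x \<in> UNIV \<Longrightarrow> onorm (\<lambda>h. D x h - h) \<le> \<delta>" by (rule onorm_le) (simp add: derivative_close)
qed auto

lemma norm_diff_le_twice_image: "norm (a - b) \<le> 2 * norm (\<Phi> a - \<Phi> b)"
proof -
  have "norm (a - b) \<le> norm (\<Phi> a - \<Phi> b) + norm ((\<Phi> a - a) - (\<Phi> b - b))"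
    using norm_triangle_ineq4[of "\<Phi> a - \<Phi> b" "(\<Phi> a - a) - (\<Phi> b - b)"] by simp
  also have "\<dots> \<le> norm (\<Phi> a - \<Phi> b) + \<delta> * norm (a - b)" using displacement_lipschitz by simp
  finally have "(1 - \<delta>) * norm (a - b) \<le> norm (\<Phi> a - \<Phi> b)" by (simp add: algebra_simps)
  moreover have "(1/2) * norm (a - b) \<le> (1 - \<delta>) * norm (a - b)"
    using small by (intro mult_right_mono) auto
  ultimately show ?thesis by simp
qed

lemma bij: "bij \<Phi>"
proof (rule bijI)
  show "inj \<Phi>"
  proof (rule injI)
    fix a b assume "\<Phi> a = \<Phi> b"
    then show "a = b" using norm_diff_le_twice_image[of a b] by simp
  qed
  have "\<exists>y. \<Phi> y = z" for z
  proof -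
    \<comment> \<open>\<open>\<Phi> y = z\<close> is a fixed point of the contraction \<open>y \<mapsto> z + y - \<Phi> y\<close>.\<close>
    have "\<exists>!y. z + y - \<Phi> y = y"
    proof (rule banach_fix_type[of \<delta>])
      show "0 \<le> \<delta>" "\<delta> < 1" using small by auto
      show "\<forall>x y. dist (z + x - \<Phi> x) (z + y - \<Phi> y) \<le> \<delta> * dist x y"
        using displacement_lipschitz
        by (simp add: dist_norm norm_minus_commute algebra_simps)
    qed
    then obtain y where "z + y - \<Phi> y = y" by blast
    then have "\<Phi> y = z" by (simp add: algebra_simps)
    then show ?thesis by blast
  qed
  then show "surj \<Phi>" by (metis surjI)
qed

lemma inv_differentiable: "inv \<Phi> differentiable (at z)"
proof -
  define y where "y = inv \<Phi> z"
  have inv_right: "\<Phi> (inv \<Phi> a) = a" for a using bij by (simp add: bij_is_surj surj_f_inv_f)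
  have "inj (D y)"
  proof (rule linear_injective_0[THEN iffD2, OF linear_derivative], intro allI impI)
    fix h assume "D y h = 0"
    then have "norm h \<le> \<delta> * norm h" using derivative_close[of y h] by simp
    moreover have "\<delta> * norm h \<le> (1/2) * norm h" using small by (intro mult_right_mono) auto
    ultimately have "norm h \<le> 0" by linarith
    then show "h = 0" by simp
  qed
  then obtain g' where g': "linear g'" "g' \<circ> D y = id"
    using linear_injective_left_inverse linear_derivative by metis
  have "norm (inv \<Phi> a - inv \<Phi> b) \<le> 2 * norm (a - b)" for a b
    using norm_diff_le_twice_image[of "inv \<Phi> a" "inv \<Phi> b"] by (simp add: inv_right)
  then have "2-lipschitz_on UNIV (inv \<Phi>)" by (intro lipschitz_onI) (auto simp: dist_norm)
  then have "continuous_on UNIV (inv \<Phi>)" by (rule lipschitz_on_continuous_on)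
  then have cont: "continuous (at z) (inv \<Phi>)"
    using continuous_on_eq_continuous_at[OF open_UNIV] by blast
  have "(inv \<Phi> has_derivative g') (at z)"
  proof (rule has_derivative_inverse_basic[of \<Phi> "D y" "inv \<Phi>" z g' UNIV])
    show "(\<Phi> has_derivative D y) (at (inv \<Phi> z))" using has_derivative y_def by simp
    show "bounded_linear g'" using g' linear_conv_bounded_linear by blast
  qed (use g' cont inv_right in auto)
  then show ?thesis by (rule differentiableI)
qed

lemma norm_vector_derivative_compose_diff_le:
  fixes \<gamma> :: "real \<Rightarrow> 'a"
  shows "norm (vector_derivative (\<Phi> \<circ> \<gamma>) (at t) - vector_derivative \<gamma> (at t))
           \<le> \<delta> * norm (vector_derivative \<gamma> (at t))"
proof (cases "\<gamma> differentiable (at t)")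
  case True
  let ?v = "vector_derivative \<gamma> (at t)"
  have "((\<lambda>s. \<Phi> (\<gamma> s)) has_derivative (\<lambda>s. D (\<gamma> t) (s *\<^sub>R ?v))) (at t)"
    using has_derivative_compose[OF True[unfolded vector_derivative_works has_vector_derivative_def]
        has_derivative] .
  then have "((\<Phi> \<circ> \<gamma>) has_vector_derivative D (\<gamma> t) ?v) (at t)"
    using linear_derivative[of "\<gamma> t"] by (simp add: has_vector_derivative_def o_def linear_scale)
  then show ?thesis using derivative_close by (simp add: vector_derivative_at)
next
  case False
  \<comment> \<open>\<open>\<Phi> \<circ> \<gamma>\<close> is not differentiable either, since \<open>inv \<Phi>\<close> is; both derivatives are junk values.\<close>
  have "\<not> (\<Phi> \<circ> \<gamma>) differentiable (at t)"
  proof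
    assume "(\<Phi> \<circ> \<gamma>) differentiable (at t)"
    then have "(inv \<Phi> \<circ> (\<Phi> \<circ> \<gamma>)) differentiable (at t)"
      using differentiable_chain_at inv_differentiable by blast
    moreover have "inv \<Phi> \<circ> (\<Phi> \<circ> \<gamma>) = \<gamma>"
      using bij by (simp add: fun_eq_iff bij_is_inj)
    ultimately show False using False by simp
  qed
  then have "(\<lambda>f'. ((\<Phi> \<circ> \<gamma>) has_vector_derivative f') (at t)) = (\<lambda>f'. (\<gamma> has_vector_derivative f') (at t))"
    using False differentiableI_vector by blast
  then have "vector_derivative (\<Phi> \<circ> \<gamma>) (at t) = vector_derivative \<gamma> (at t)"
    by (simp add: vector_derivative_def)
  then show ?thesis using small by simp
qed

lemma norm_vector_derivative_compose_le:
  fixes \<gamma> :: "real \<Rightarrow> 'a"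
  shows "norm (vector_derivative (\<Phi> \<circ> \<gamma>) (at t)) \<le> (1 + \<delta>) * norm (vector_derivative \<gamma> (at t))"
  using norm_vector_derivative_compose_diff_le[of \<gamma> t]
    norm_triangle_sub[of "vector_derivative (\<Phi> \<circ> \<gamma>) (at t)" "vector_derivative \<gamma> (at t)"]
  by (simp add: algebra_simps)

lemma Gamma_compose:
  assumes "\<gamma> \<in> Gamma T \<Omega>" "\<Phi> ` closure \<Omega> \<subseteq> closure \<Omega>"
  shows "\<Phi> \<circ> \<gamma> \<in> Gamma T \<Omega>"
proof -
  have "absolutely_continuous_on_interval 0 T \<gamma>" "\<forall>t\<in>{0..T}. \<gamma> t \<in> closure \<Omega>"
    using assms(1) by (auto simp: Gamma_def)
  moreover have "1 + \<delta> \<ge> 0" using small by simp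
  ultimately show ?thesis
    using absolutely_continuous_on_interval_compose_lipschitz[OF _ _ lipschitz] assms(2)
    by (auto simp: Gamma_def)
qed

end

section \<open>Local defining functions of the boundary\<close>

locale boundary_chart =
  fixes \<Omega> :: "'a::euclidean_space set" and x :: 'a and r :: real and \<phi> :: "'a \<Rightarrow> real"
    and grad :: "'a \<Rightarrow> 'a" and H :: "'a \<Rightarrow> 'a \<Rightarrow> 'a"
  assumes r: "r > 0"
    and \<phi>_deriv: "\<And>y. y \<in> ball x r \<Longrightarrow> (\<phi> has_derivative (\<lambda>h. grad y \<bullet> h)) (at y)"
    and grad_deriv: "\<And>y. y \<in> ball x r \<Longrightarrow> (grad has_derivative H y) (at y)"
    and Hessian_cont: "\<And>v. continuous_on (ball x r) (\<lambda>y. H y v)"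
    and grad_nonzero: "\<And>y. y \<in> ball x r \<Longrightarrow> grad y \<noteq> 0"
    and \<Omega>_local: "\<Omega> \<inter> ball x r = {y \<in> ball x r. \<phi> y < 0}"
    and centre_closure: "x \<in> closure \<Omega>" and centre_not_in: "x \<notin> \<Omega>"
begin

lemma \<phi>_continuous_on: "continuous_on (ball x r) \<phi>"
proof -
  have "\<forall>y\<in>ball x r. \<phi> differentiable (at y)" using \<phi>_deriv differentiableI by blast
  then show ?thesis using differentiable_imp_continuous_on differentiable_at_imp_differentiable_on by blast
qed

lemma \<phi>_nonpos_if_closure:
  assumes "y \<in> closure \<Omega>" "y \<in> ball x r"
  shows "\<phi> y \<le> 0"
proof (rule ccontr)
  assume "\<not> \<phi> y \<le> 0"
  let ?U = "ball x r \<inter> \<phi> -` {0<..}"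
  have neg: "\<phi> z < 0" if "z \<in> ball x r" "z \<in> \<Omega>" for z using that \<Omega>_local by blast
  have "open ?U" by (rule continuous_open_preimage[OF \<phi>_continuous_on open_ball open_greaterThan])
  moreover have "?U \<inter> \<Omega> = {}" using neg by fastforce
  ultimately have "?U \<inter> closure \<Omega> = {}" by (simp add: open_Int_closure_eq_empty)
  then show False using assms \<open>\<not> \<phi> y \<le> 0\<close> by auto
qed

lemma closure_if_\<phi>_nonpos:
  assumes y: "y \<in> ball x r" and "\<phi> y \<le> 0"
  shows "y \<in> closure \<Omega>"
proof (cases "\<phi> y < 0")
  case True
  then show ?thesis using \<Omega>_local y closure_subset by blast
next
  case False
  \<comment> \<open>Moving from \<open>y\<close> against the non-vanishing gradient enters \<open>{\<phi> < 0}\<close>.\<close>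
  define g where "g = grad y"
  define z where "z t = y + t *\<^sub>R (- g)" for t
  have "g \<noteq> 0" using grad_nonzero y by (simp add: g_def)
  have "((\<lambda>t. \<phi> (z t)) has_derivative (\<lambda>t. grad y \<bullet> (t *\<^sub>R (- g)))) (at 0)"
    unfolding z_def
    by (rule has_derivative_compose[of "\<lambda>t. y + t *\<^sub>R (- g)"], auto intro!: derivative_eq_intros)
       (use \<phi>_deriv[OF y] in simp)
  then have "((\<lambda>t. \<phi> (z t)) has_real_derivative (- (g \<bullet> g))) (at 0)"
    unfolding has_field_derivative_def by (rule has_derivative_eq_rhs) (auto simp: fun_eq_iff g_def)
  then obtain d where "d > 0" and d: "\<And>h. 0 < h \<Longrightarrow> h < d \<Longrightarrow> \<phi> (z h) < \<phi> (z 0)"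
    using DERIV_neg_dec_right[of "\<lambda>t. \<phi> (z t)" "- (g \<bullet> g)" 0] \<open>g \<noteq> 0\<close> by auto
  have z_lim: "(z \<longlongrightarrow> y) (at_right 0)"
    unfolding z_def by (rule tendsto_eq_intros) (auto intro!: tendsto_eq_intros)
  have "\<forall>\<^sub>F t in at_right 0. z t \<in> ball x r"
    using topological_tendstoD[OF z_lim open_ball y] .
  moreover have "\<forall>\<^sub>F t in at_right 0. \<phi> (z t) < 0"
    using eventually_at_right_real[OF \<open>d > 0\<close>] d False \<open>\<phi> y \<le> 0\<close>
    by (auto elim!: eventually_mono simp: z_def)
  ultimately have "\<forall>\<^sub>F t in at_right 0. z t \<in> closure \<Omega>"
    by eventually_elim (use \<Omega>_local closure_subset in blast)
  then show ?thesis by (intro Lim_in_closed_set[OF closed_closure _ _ z_lim]) auto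
qed

lemma \<phi>_centre: "\<phi> x = 0"
proof -
  have xb: "x \<in> ball x r" using r by simp
  have "\<phi> x \<le> 0" using \<phi>_nonpos_if_closure[OF centre_closure xb] .
  moreover have "\<not> \<phi> x < 0" using \<Omega>_local centre_not_in xb by blast
  ultimately show ?thesis by simp
qed

lemma linear_Hessian: "y \<in> ball x r \<Longrightarrow> linear (H y)"
  using grad_deriv has_derivative_linear by blast

lemma Hessian_bounded: "\<exists>M\<ge>0. \<forall>y\<in>cball x (r/2). \<forall>h. norm (H y h) \<le> M * norm h"
proof -
  have sub: "cball x (r/2) \<subseteq> ball x r" using r by (auto simp: subset_eq)
  have "\<exists>B. \<forall>y\<in>cball x (r/2). norm (H y b) \<le> B" for b
  proof -
    have "compact ((\<lambda>y. H y b) ` cball x (r/2))"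
      by (rule compact_continuous_image[OF continuous_on_subset[OF Hessian_cont sub] compact_cball])
    then obtain B where "\<forall>z\<in>(\<lambda>y. H y b) ` cball x (r/2). norm z \<le> B"
      using compact_imp_bounded bounded_iff by metis
    then show ?thesis by auto
  qed
  then obtain Bf where Bf: "\<And>b y. y \<in> cball x (r/2) \<Longrightarrow> norm (H y b) \<le> Bf b" by metis
  define M where "M = (\<Sum>b\<in>Basis. Bf b)"
  have Bf0: "Bf b \<ge> 0" for b using Bf[of x b] r by (meson centre_in_cball less_eq_real_def half_gt_zero norm_ge_zero order_trans)
  have "norm (H y h) \<le> M * norm h" if y: "y \<in> cball x (r/2)" for y h
  proof -
    have lin: "linear (H y)" using linear_Hessian sub y by blast
    have "H y h = H y (\<Sum>b\<in>Basis. (h \<bullet> b) *\<^sub>R b)" by (simp add: euclidean_representation)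
    also have "\<dots> = (\<Sum>b\<in>Basis. (h \<bullet> b) *\<^sub>R H y b)" using lin by (simp add: linear_sum linear_scale)
    finally have eq: "H y h = (\<Sum>b\<in>Basis. (h \<bullet> b) *\<^sub>R H y b)" .
    have "norm (H y h) = norm (\<Sum>b\<in>Basis. (h \<bullet> b) *\<^sub>R H y b)" using eq by simp
    also have "\<dots> \<le> (\<Sum>b\<in>Basis. norm ((h \<bullet> b) *\<^sub>R H y b))" by (rule norm_sum)
    also have "\<dots> \<le> (\<Sum>b\<in>Basis. norm h * Bf b)"
    proof (rule sum_mono)
      fix b :: 'a assume b: "b \<in> Basis"
      have "norm ((h \<bullet> b) *\<^sub>R H y b) = \<bar>h \<bullet> b\<bar> * norm (H y b)" by simp
      also have "\<dots> \<le> norm h * Bf b" using Basis_le_norm[OF b, of h] Bf[OF y, of b]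
        by (intro mult_mono) auto
      finally show "norm ((h \<bullet> b) *\<^sub>R H y b) \<le> norm h * Bf b" .
    qed
    also have "\<dots> = M * norm h" by (simp add: M_def sum_distrib_left mult.commute)
    finally show ?thesis .
  qed
  moreover have "M \<ge> 0" unfolding M_def using Bf0 by (simp add: sum_nonneg)
  ultimately show ?thesis by blast
qed

end

locale bounded_Hessian_chart = boundary_chart +
  fixes M :: real
  assumes M0: "M \<ge> 0" and MH: "\<And>y h. y \<in> cball x (r/2) \<Longrightarrow> norm (H y h) \<le> M * norm h"
begin

definition "Lc = M + 1"
definition "G = norm (grad x) + Lc * (r/2)"

lemma Lc1: "Lc \<ge> 1" using M0 by (simp add: Lc_def)
lemma G0: "G \<ge> 0" using Lc1 r by (simp add: G_def)

lemma cball_half_subset: "cball x (r/2) \<subseteq> ball x r" using r by (auto simp: subset_eq)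

lemma grad_lipschitz: assumes "y \<in> cball x (r/2)" "z \<in> cball x (r/2)"
  shows "norm (grad y - grad z) \<le> Lc * norm (y - z)"
proof (rule differentiable_bound[of "cball x (r/2)" grad H])
  show "\<And>y. y \<in> cball x (r/2) \<Longrightarrow> (grad has_derivative H y) (at y within cball x (r/2))"
    using grad_deriv cball_half_subset has_derivative_at_withinI by blast
  show "\<And>y. y \<in> cball x (r/2) \<Longrightarrow> onorm (H y) \<le> Lc"
  proof (rule onorm_le)
    fix y h assume "y \<in> cball x (r/2)"
    then have "norm (H y h) \<le> M * norm h" by (rule MH)
    also have "\<dots> \<le> Lc * norm h" by (intro mult_right_mono) (auto simp: Lc_def)
    finally show "norm (H y h) \<le> Lc * norm h" .
  qed
qed (use assms in auto)

lemma norm_grad_le: assumes "y \<in> cball x (r/2)" shows "norm (grad y) \<le> G"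
proof -
  have "norm (grad y) \<le> norm (grad x) + norm (grad y - grad x)" by (metis norm_triangle_sub add.commute)
  also have "\<dots> \<le> norm (grad x) + Lc * norm (y - x)" using grad_lipschitz[OF assms, of x] r by simp
  also have "\<dots> \<le> norm (grad x) + Lc * (r/2)" using assms Lc1 by (intro add_left_mono mult_left_mono) (auto simp: dist_norm norm_minus_commute)
  finally show ?thesis by (simp add: G_def)
qed

lemma \<phi>_lipschitz: assumes "y \<in> cball x (r/2)" "z \<in> cball x (r/2)"
  shows "\<bar>\<phi> y - \<phi> z\<bar> \<le> G * norm (y - z)"
proof -
  have "norm (\<phi> y - \<phi> z) \<le> G * norm (y - z)"
  proof (rule differentiable_bound[of "cball x (r/2)" \<phi> "\<lambda>y h. grad y \<bullet> h"])
    show "\<And>y. y \<in> cball x (r/2) \<Longrightarrow> (\<phi> has_derivative (\<lambda>h. grad y \<bullet> h)) (at y within cball x (r/2))"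
      using \<phi>_deriv cball_half_subset has_derivative_at_withinI by blast
    show "\<And>y. y \<in> cball x (r/2) \<Longrightarrow> onorm (\<lambda>h. grad y \<bullet> h) \<le> G"
      using onorm_inner_le norm_grad_le order_trans by blast
  qed (use assms in auto)
  then show ?thesis by simp
qed

lemma \<phi>_linearization_error_le:
  assumes seg: "\<And>t. t \<in> {0..1} \<Longrightarrow> a + t *\<^sub>R (b - a) \<in> cball x (r/2)"
    and x0: "x0 \<in> cball x (r/2)"
    and W: "\<And>t. t \<in> {0..1} \<Longrightarrow> norm (a + t *\<^sub>R (b - a) - x0) \<le> W"
  shows "\<bar>\<phi> b - \<phi> a - grad x0 \<bullet> (b - a)\<bar> \<le> norm (b - a) * (Lc * W)"
proof -
  define S where "S = {a + t *\<^sub>R (b - a) | t. t \<in> {0..1}} \<union> {x0}"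
  have Ssub: "S \<subseteq> cball x (r/2)" using seg x0 by (auto simp: S_def)
  have W0: "W \<ge> 0" using W[of 0] by (meson atLeastAtMost_iff norm_ge_zero order_trans zero_le_one order_refl)
  have "norm (\<phi> b - \<phi> a - (\<lambda>h. grad x0 \<bullet> h) (b - a)) \<le> norm (b - a) * (Lc * W)"
  proof (rule differentiable_bound_linearization[of a b S \<phi> "\<lambda>y h. grad y \<bullet> h" x0 "Lc * W"])
    show "\<And>t. t \<in> {0..1} \<Longrightarrow> a + t *\<^sub>R (b - a) \<in> S" by (auto simp: S_def)
    show "\<And>y. y \<in> S \<Longrightarrow> (\<phi> has_derivative (\<lambda>h. grad y \<bullet> h)) (at y within S)"
      using \<phi>_deriv cball_half_subset Ssub has_derivative_at_withinI by blast
    show "x0 \<in> S" by (simp add: S_def)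
    show "onorm ((\<lambda>h. grad y \<bullet> h) - (\<lambda>h. grad x0 \<bullet> h)) \<le> Lc * W" if y: "y \<in> S" for y
    proof -
      have "onorm ((\<lambda>h. grad y \<bullet> h) - (\<lambda>h. grad x0 \<bullet> h)) = onorm (\<lambda>h. (grad y - grad x0) \<bullet> h)"
        by (simp add: fun_diff_def inner_diff_left)
      also have "\<dots> \<le> norm (grad y - grad x0)" by (rule onorm_inner_le)
      also have "\<dots> \<le> Lc * norm (y - x0)" using grad_lipschitz Ssub y x0 by blast
      also have "\<dots> \<le> Lc * W"
      proof (cases "y = x0")
        case True then show ?thesis using W0 Lc1 by simp
      next
        case False
        then obtain t where "t \<in> {0..1}" "y = a + t *\<^sub>R (b - a)" using y by (auto simp: S_def)
        then show ?thesis using W Lc1 by (intro mult_left_mono) auto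
      qed
      finally show ?thesis .
    qed
  qed
  then show ?thesis by simp
qed

definition "nn = norm (grad x)"
definition "N2 = grad x \<bullet> grad x"

lemma nn0: "nn > 0" using grad_nonzero[of x] r by (simp add: nn_def)
lemma N2nn: "N2 = nn\<^sup>2" by (simp add: N2_def nn_def power2_norm_eq_inner)
lemma N20: "N2 > 0" using nn0 N2nn by simp

definition "\<rho> = min (r/8) (N2 / (12 * Lc * nn))"
definition "c1 = Lc + 8 * G / \<rho>"
definition "K = 4 * (24 * Lc * nn * c1 + 24 * Lc * nn * G / \<rho>) / N2\<^sup>2"
definition "\<epsilon> = min (\<rho>/4) (min (N2 / (2 * Lc * nn)) (1 / ((2 * c1 / N2 + K * \<rho>) * nn + 1)))"
definition "Cd = 4 / \<rho> + nn * (2 * c1 / N2 + 6 * K * \<rho>)"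
definition "Cp = 1 + nn * (4 * G / N2 + K * \<rho>\<^sup>2)"

lemma \<rho>0: "\<rho> > 0" using r N20 nn0 Lc1 by (simp add: \<rho>_def)
lemma \<rho>R: "\<rho> \<le> r/8" by (simp add: \<rho>_def)
lemma \<rho>n: "3 * Lc * nn * \<rho> \<le> N2 / 4"
proof -
  have "3 * Lc * nn * \<rho> \<le> 3 * Lc * nn * (N2 / (12 * Lc * nn))"
    using Lc1 nn0 by (intro mult_left_mono) (auto simp: \<rho>_def)
  also have "\<dots> = N2 / 4" using Lc1 nn0 by (simp add: field_simps)
  finally show ?thesis .
qed

lemma c1_0: "c1 \<ge> 0" using Lc1 G0 \<rho>0 by (simp add: c1_def)

lemma K0: "K \<ge> 0" using Lc1 nn0 c1_0 G0 \<rho>0 by (simp add: K_def)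

lemma K_dominates: "24 * Lc * nn * c1 \<le> (N2/2)\<^sup>2 * K" "24 * Lc * nn * G / \<rho> \<le> (N2/2)\<^sup>2 * K"
proof -
  have "(N2/2)\<^sup>2 * K = 24 * Lc * nn * c1 + 24 * Lc * nn * G / \<rho>"
    using N20 by (simp add: K_def power2_eq_square field_simps)
  moreover have "24 * Lc * nn * c1 \<ge> 0" "24 * Lc * nn * G / \<rho> \<ge> 0"
    using Lc1 nn0 c1_0 G0 \<rho>0 by auto
  ultimately show "24 * Lc * nn * c1 \<le> (N2/2)\<^sup>2 * K" "24 * Lc * nn * G / \<rho> \<le> (N2/2)\<^sup>2 * K"
    by linarith+
qed

lemma \<epsilon>0: "\<epsilon> > 0"
proof -
  have "(2 * c1 / N2 + K * \<rho>) * nn \<ge> 0" using c1_0 N20 K0 \<rho>0 nn0 by simp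
  then show ?thesis using \<rho>0 N20 Lc1 nn0 by (simp add: \<epsilon>_def)
qed

lemma Cd0: "Cd \<ge> 0" using \<rho>0 nn0 c1_0 N20 K0 by (simp add: Cd_def)
lemma Cp0: "Cp \<ge> 0" using nn0 G0 N20 K0 by (simp add: Cp_def)

end

section \<open>The transport map at a boundary point\<close>

locale boundary_transport = bounded_Hessian_chart +
  fixes v :: 'a
  assumes v_small: "norm v < \<epsilon>" and v_target: "x + v \<in> closure \<Omega>"
begin

lemma norm_v_le: "norm v \<le> \<rho>/4" using v_small by (simp add: \<epsilon>_def)

lemma v_grad_small: "Lc * norm v * nn \<le> N2/2"
proof -
  have "norm v \<le> N2 / (2 * Lc * nn)" using v_small by (simp add: \<epsilon>_def)
  then have "Lc * nn * norm v \<le> Lc * nn * (N2 / (2 * Lc * nn))" using Lc1 nn0 by (intro mult_left_mono) auto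
  also have "\<dots> = N2/2" using Lc1 nn0 by (simp add: field_simps)
  finally show ?thesis by (simp add: mult.commute mult.left_commute)
qed

lemma v_correction_small: "(2 * c1 / N2 + K * \<rho>) * nn * norm v \<le> 1"
proof -
  define X where "X = (2 * c1 / N2 + K * \<rho>) * nn"
  have X0: "X \<ge> 0" using c1_0 N20 K0 \<rho>0 nn0 by (simp add: X_def)
  have "norm v \<le> 1 / (X + 1)" using v_small by (simp add: \<epsilon>_def X_def)
  then have "X * norm v \<le> X * (1 / (X + 1))" using X0 by (intro mult_left_mono) auto
  also have "\<dots> \<le> 1" using X0 by (simp add: field_simps)
  finally show ?thesis by (simp add: X_def)
qed

text \<open>\<open>w\<close> is the translation by \<open>v\<close> damped by the bump \<open>q\<close>, and \<open>\<Phi>\<close> corrects it by \<open>\<mu>\<close>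
  along the normal \<open>n\<close>. \<open>excess y\<close> is the change of \<open>\<phi>\<close> from \<open>y\<close> to \<open>w y\<close> beyond the
  nonpositive part \<open>q y A\<close>, and \<open>\<kappa>\<close> is the slope of \<open>\<phi>\<close> along \<open>n\<close> at \<open>x + v\<close>.\<close>

definition "n = grad x"
definition "q y = bump x \<rho> y"
definition "w y = y + q y *\<^sub>R v"
definition "A = \<phi> (x + v) - \<phi> x"
definition "\<kappa> = grad (x + v) \<bullet> n"
definition "excess y = \<phi> (w y) - \<phi> y - q y * A"
definition "\<mu> y = excess y / \<kappa> + K * norm v * q y * ((y - x) \<bullet> (y - x))"
definition "\<Phi> y = w y - \<mu> y *\<^sub>R n"
definition "quad y = K * norm v * q y * (norm (y - x))\<^sup>2"
definition "Dq y h = bump_derivative x \<rho> y h"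
definition "D_excess y h = grad (w y) \<bullet> (h + Dq y h *\<^sub>R v) - grad y \<bullet> h - Dq y h * A"
definition "D\<mu> y h = D_excess y h / \<kappa> + K * norm v * (Dq y h * ((y - x) \<bullet> (y - x)) + q y * (2 * ((y - x) \<bullet> h)))"
definition "D\<Phi> y h = h + Dq y h *\<^sub>R v - D\<mu> y h *\<^sub>R n"

lemma x_plus_v_cball: "x + v \<in> cball x (r/2)" using norm_v_le \<rho>R \<rho>0 by (simp add: dist_norm)
lemma x_plus_v_ball: "x + v \<in> ball x r" using x_plus_v_cball cball_half_subset by blast
lemma centre_cball: "x \<in> cball x (r/2)" using r by simp

lemma A_nonpos: "A \<le> 0" using \<phi>_nonpos_if_closure[OF v_target x_plus_v_ball] \<phi>_centre by (simp add: A_def)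
lemma abs_A_le: "\<bar>A\<bar> \<le> G * norm v" using \<phi>_lipschitz[OF x_plus_v_cball centre_cball] by (simp add: A_def)

lemma \<kappa>_ge: "\<kappa> \<ge> N2/2"
proof -
  have "\<kappa> = N2 + (grad (x + v) - grad x) \<bullet> grad x" by (simp add: \<kappa>_def n_def N2_def inner_diff_left)
  moreover have "\<bar>(grad (x + v) - grad x) \<bullet> grad x\<bar> \<le> Lc * norm v * nn"
  proof -
    have "\<bar>(grad (x + v) - grad x) \<bullet> grad x\<bar> \<le> norm (grad (x + v) - grad x) * nn"
      by (simp add: Cauchy_Schwarz_ineq2 nn_def)
    also have "\<dots> \<le> Lc * norm v * nn" using grad_lipschitz[OF x_plus_v_cball centre_cball] nn0 by (intro mult_right_mono) auto
    finally show ?thesis .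
  qed
  ultimately show ?thesis using v_grad_small by linarith
qed
lemma \<kappa>0: "\<kappa> > 0" using \<kappa>_ge N20 by linarith

lemma q_bounds: "0 \<le> q y" "q y \<le> 1" by (simp_all add: q_def bump_nonneg bump_le_one)

lemma \<Phi>_outside: assumes "norm (y - x) \<ge> \<rho>"
  shows "q y = 0" "\<Phi> y = y" "D\<Phi> y = (\<lambda>h. h)"
proof -
  show q: "q y = 0" using bump_outside[OF \<rho>0 assms] by (simp add: q_def)
  have dq: "Dq y h = 0" for h using bump_outside[OF \<rho>0 assms] by (simp add: Dq_def)
  show "\<Phi> y = y" by (simp add: \<Phi>_def \<mu>_def excess_def w_def q)
  show "D\<Phi> y = (\<lambda>h. h)" by (simp add: fun_eq_iff D\<Phi>_def D\<mu>_def D_excess_def w_def q dq)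
qed

lemma \<Phi>_centre: "\<Phi> x = x + v"
  by (simp add: \<Phi>_def \<mu>_def excess_def w_def q_def bump_centre A_def)

lemma w_ball: assumes "norm (y - x) < r/2" shows "w y \<in> ball x r"
proof -
  have e: "w y - x = (y - x) + q y *\<^sub>R v" by (simp add: w_def algebra_simps)
  have "norm (w y - x) \<le> norm (y - x) + norm (q y *\<^sub>R v)" unfolding e by (rule norm_triangle_ineq)
  also have "\<dots> \<le> norm (y - x) + norm v" using q_bounds[of y] by (simp add: mult_left_le_one_le abs_of_nonneg)
  finally have "norm (w y - x) < r" using assms norm_v_le \<rho>R \<rho>0 by linarith
  then show ?thesis by (simp add: dist_norm norm_minus_commute)
qed

lemma excess_has_derivative: assumes "norm (y - x) < r/2" shows "(excess has_derivative D_excess y) (at y)"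
proof -
  have dq: "(q has_derivative Dq y) (at y)" unfolding q_def[abs_def] Dq_def[abs_def] by (rule bump_has_derivative)
  have dw: "(w has_derivative (\<lambda>h. h + Dq y h *\<^sub>R v)) (at y)"
    unfolding w_def[abs_def] by (auto intro!: derivative_eq_intros dq)
  have dphiw: "(\<phi> has_derivative (\<lambda>h. grad (w y) \<bullet> h)) (at (w y))" using \<phi>_deriv w_ball[OF assms] by blast
  have dpw: "((\<lambda>y. \<phi> (w y)) has_derivative (\<lambda>h. grad (w y) \<bullet> (h + Dq y h *\<^sub>R v))) (at y)"
    using has_derivative_compose[OF dw dphiw] .
  have dphiy: "(\<phi> has_derivative (\<lambda>h. grad y \<bullet> h)) (at y)" using \<phi>_deriv assms r by (simp add: dist_norm norm_minus_commute)
  show "(excess has_derivative D_excess y) (at y)"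
    unfolding excess_def[abs_def] D_excess_def[abs_def]
    by (auto intro!: derivative_eq_intros dpw dphiy dq)
qed

lemma \<Phi>_has_derivative_near:
  assumes "norm (y - x) < r/2"
  shows "(\<Phi> has_derivative D\<Phi> y) (at y)"
proof -
  have dq: "(q has_derivative Dq y) (at y)"
    unfolding q_def[abs_def] Dq_def[abs_def] by (rule bump_has_derivative)
  have d\<mu>: "(\<mu> has_derivative D\<mu> y) (at y)"
    using \<kappa>0 unfolding \<mu>_def[abs_def]
    by (auto intro!: derivative_eq_intros excess_has_derivative[OF assms] dq
        simp: fun_eq_iff D\<mu>_def inner_commute algebra_simps)
  show ?thesis
    unfolding \<Phi>_def[abs_def] w_def[abs_def]
    by (auto intro!: derivative_eq_intros dq d\<mu> simp: fun_eq_iff D\<Phi>_def)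
qed

lemma \<Phi>_has_derivative: "(\<Phi> has_derivative D\<Phi> y) (at y)"
proof (cases "norm (y - x) < r/2")
  case True then show ?thesis by (rule \<Phi>_has_derivative_near)
next
  case False
  then have yo: "norm (y - x) > \<rho>" using \<rho>R \<rho>0 by linarith
  have "((\<lambda>z. z) has_derivative (\<lambda>h. h)) (at y)" by (rule has_derivative_ident)
  then have "(\<Phi> has_derivative (\<lambda>h. h)) (at y)"
  proof (rule has_derivative_transform_within_open[where s="{z. norm (z - x) > \<rho>}"])
    show "open {z. norm (z - x) > \<rho>}" by (intro open_Collect_less continuous_intros)
    show "y \<in> {z. norm (z - x) > \<rho>}" using yo by simp
    show "\<And>z. z \<in> {z. norm (z - x) > \<rho>} \<Longrightarrow> z = \<Phi> z" using \<Phi>_outside(2) by (simp add: less_imp_le)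
  qed
  then show ?thesis using \<Phi>_outside(3)[of y] yo by simp
qed

lemma cball_if_near: "norm (y - x) < \<rho> \<Longrightarrow> y \<in> cball x (r/2)"
  using \<rho>R \<rho>0 r by (simp add: dist_norm norm_minus_commute)

lemma norm_w_minus: "norm (w y - y) = q y * norm v" using q_bounds[of y] by (simp add: w_def abs_of_nonneg)

lemma w_cball: assumes "norm (y - x) < \<rho>" shows "w y \<in> cball x (r/2)"
proof -
  have "norm (w y - x) \<le> norm (y - x) + norm (w y - y)" by (metis norm_triangle_sub add.commute diff_add_cancel
        norm_triangle_ineq add_diff_cancel_left' diff_diff_add)
  also have "\<dots> \<le> norm (y - x) + norm v" using norm_w_minus[of y] q_bounds[of y] by (simp add: mult_left_le_one_le)
  finally show ?thesis using assms norm_v_le \<rho>R \<rho>0 by (simp add: dist_norm norm_minus_commute)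
qed

lemma abs_Dq_le: "\<bar>Dq y h\<bar> \<le> 4 / \<rho> * norm h" using abs_bump_derivative_le[OF \<rho>0] by (simp add: Dq_def)

lemma abs_D_excess_le: assumes "norm (y - x) < \<rho>" shows "\<bar>D_excess y h\<bar> \<le> c1 * norm v * norm h"
proof -
  have e: "D_excess y h = (grad (w y) - grad y) \<bullet> h + Dq y h * (grad (w y) \<bullet> v) - Dq y h * A"
    by (simp add: D_excess_def inner_add_right inner_diff_left)
  have t1: "\<bar>(grad (w y) - grad y) \<bullet> h\<bar> \<le> Lc * norm v * norm h"
  proof -
    have "\<bar>(grad (w y) - grad y) \<bullet> h\<bar> \<le> norm (grad (w y) - grad y) * norm h" by (rule Cauchy_Schwarz_ineq2)
    also have "\<dots> \<le> (Lc * norm (w y - y)) * norm h"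
      using grad_lipschitz[OF w_cball[OF assms] cball_if_near[OF assms]] by (intro mult_right_mono) auto
    also have "\<dots> \<le> (Lc * norm v) * norm h"
      using norm_w_minus[of y] q_bounds[of y] Lc1 by (intro mult_right_mono mult_left_mono) (auto simp: mult_left_le_one_le)
    finally show ?thesis by simp
  qed
  have t2: "\<bar>Dq y h * (grad (w y) \<bullet> v)\<bar> \<le> (4 / \<rho> * norm h) * (G * norm v)"
  proof -
    have "\<bar>grad (w y) \<bullet> v\<bar> \<le> G * norm v"
      using Cauchy_Schwarz_ineq2[of "grad (w y)" v] norm_grad_le[OF w_cball[OF assms]]
      by (meson mult_right_mono norm_ge_zero order_trans)
    then show ?thesis unfolding abs_mult using abs_Dq_le \<rho>0 by (intro mult_mono) auto
  qed
  have t3: "\<bar>Dq y h * A\<bar> \<le> (4 / \<rho> * norm h) * (G * norm v)"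
    unfolding abs_mult using abs_Dq_le abs_A_le \<rho>0 by (intro mult_mono) auto
  have "\<bar>D_excess y h\<bar> \<le> Lc * norm v * norm h + (4 / \<rho> * norm h) * (G * norm v) + (4 / \<rho> * norm h) * (G * norm v)"
    unfolding e using t1 t2 t3 by linarith
  also have "\<dots> = c1 * norm v * norm h" by (simp add: c1_def algebra_simps)
  finally show ?thesis .
qed

lemma inner_self_diff: "(y - x) \<bullet> (y - x) = (norm (y - x))\<^sup>2" by (simp add: power2_norm_eq_inner)

lemma abs_D\<mu>_le: assumes "norm (y - x) < \<rho>" shows "\<bar>D\<mu> y h\<bar> \<le> (2 * c1 / N2 + 6 * K * \<rho>) * norm v * norm h"
proof -
  have k: "\<kappa> > 0" "\<kappa> \<ge> N2/2" using \<kappa>0 \<kappa>_ge by auto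
  have t1: "\<bar>D_excess y h / \<kappa>\<bar> \<le> 2 * c1 / N2 * norm v * norm h"
  proof -
    have "\<bar>D_excess y h / \<kappa>\<bar> = \<bar>D_excess y h\<bar> / \<kappa>" using k by simp
    also have "\<dots> \<le> (c1 * norm v * norm h) / (N2/2)"
      using abs_D_excess_le[OF assms] k N20 c1_0 by (intro frac_le) auto
    also have "\<dots> = 2 * c1 / N2 * norm v * norm h" by simp
    finally show ?thesis .
  qed
  have d: "norm (y - x) \<le> \<rho>" using assms by simp
  have sq: "\<bar>(y - x) \<bullet> (y - x)\<bar> \<le> \<rho> * \<rho>" unfolding inner_self_diff power2_eq_square abs_mult abs_norm_cancel
    by (rule mult_mono[OF d d]) (use \<rho>0 in auto)
  have t2: "\<bar>Dq y h * ((y - x) \<bullet> (y - x))\<bar> \<le> (4 / \<rho> * norm h) * (\<rho> * \<rho>)"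
    unfolding abs_mult using abs_Dq_le sq \<rho>0 by (intro mult_mono) auto
  have t3: "\<bar>q y * (2 * ((y - x) \<bullet> h))\<bar> \<le> 1 * (2 * (\<rho> * norm h))"
  proof -
    have "\<bar>(y - x) \<bullet> h\<bar> \<le> \<rho> * norm h"
      using Cauchy_Schwarz_ineq2[of "y - x" h] d by (meson mult_right_mono norm_ge_zero order_trans)
    then show ?thesis unfolding abs_mult using q_bounds[of y] by (intro mult_mono) auto
  qed
  have t23: "\<bar>K * norm v * (Dq y h * ((y - x) \<bullet> (y - x)) + q y * (2 * ((y - x) \<bullet> h)))\<bar>
      \<le> K * norm v * (6 * \<rho> * norm h)"
  proof -
    have "\<bar>Dq y h * ((y - x) \<bullet> (y - x)) + q y * (2 * ((y - x) \<bullet> h))\<bar> \<le> 6 * \<rho> * norm h"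
    proof -
      have "(4 / \<rho> * norm h) * (\<rho> * \<rho>) = 4 * \<rho> * norm h" using \<rho>0 by (simp add: field_simps)
      then show ?thesis using t2 t3 by linarith
    qed
    then show ?thesis unfolding abs_mult using K0 by (simp add: mult_left_mono)
  qed
  have "\<bar>D\<mu> y h\<bar> \<le> 2 * c1 / N2 * norm v * norm h + K * norm v * (6 * \<rho> * norm h)"
    unfolding D\<mu>_def using t1 t23 by linarith
  also have "\<dots> = (2 * c1 / N2 + 6 * K * \<rho>) * norm v * norm h" by (simp add: algebra_simps)
  finally show ?thesis .
qed

lemma norm_D\<Phi>_minus_id_le: "norm (D\<Phi> y h - h) \<le> Cd * norm v * norm h"
proof (cases "norm (y - x) < \<rho>")
  case True
  have "norm (D\<Phi> y h - h) = norm (Dq y h *\<^sub>R v - D\<mu> y h *\<^sub>R n)" by (simp add: D\<Phi>_def)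
  also have "\<dots> \<le> \<bar>Dq y h\<bar> * norm v + \<bar>D\<mu> y h\<bar> * nn"
    using norm_triangle_ineq4[of "Dq y h *\<^sub>R v" "D\<mu> y h *\<^sub>R n"] by (simp add: n_def nn_def)
  also have "\<dots> \<le> (4 / \<rho> * norm h) * norm v + ((2 * c1 / N2 + 6 * K * \<rho>) * norm v * norm h) * nn"
    using abs_Dq_le abs_D\<mu>_le[OF True] nn0 by (intro add_mono mult_right_mono) auto
  also have "\<dots> = Cd * norm v * norm h" by (simp add: Cd_def algebra_simps)
  finally show ?thesis .
next
  case False
  then show ?thesis using \<Phi>_outside(3)[of y] Cd0 by simp
qed

lemma excess_centre: "excess x = 0" by (simp add: excess_def w_def q_def bump_centre A_def)

lemma abs_excess_le_dist: assumes "norm (y - x) < \<rho>" shows "\<bar>excess y\<bar> \<le> c1 * norm v * norm (y - x)"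
proof -
  have "norm (excess y - excess x) \<le> (c1 * norm v) * norm (y - x)"
  proof (rule differentiable_bound[of "ball x \<rho>" excess D_excess])
    show "\<And>z. z \<in> ball x \<rho> \<Longrightarrow> (excess has_derivative D_excess z) (at z within ball x \<rho>)"
    proof -
      fix z assume z: "z \<in> ball x \<rho>"
      then have "norm (z - x) < r/2" using \<rho>R r by (simp add: dist_norm norm_minus_commute)
      then show "(excess has_derivative D_excess z) (at z within ball x \<rho>)" using excess_has_derivative has_derivative_at_withinI by blast
    qed
    show "\<And>z. z \<in> ball x \<rho> \<Longrightarrow> onorm (D_excess z) \<le> c1 * norm v"
      by (rule onorm_le) (use abs_D_excess_le in \<open>auto simp: dist_norm norm_minus_commute\<close>)
  qed (use assms \<rho>0 in \<open>auto simp: dist_norm norm_minus_commute\<close>)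
  then show ?thesis by (simp add: excess_centre)
qed

lemma abs_excess_le_bump: assumes "norm (y - x) < \<rho>" shows "\<bar>excess y\<bar> \<le> 2 * G * q y * norm v"
proof -
  have "\<bar>\<phi> (w y) - \<phi> y\<bar> \<le> G * norm (w y - y)" using \<phi>_lipschitz[OF w_cball[OF assms] cball_if_near[OF assms]] .
  also have "\<dots> = G * q y * norm v" using norm_w_minus by simp
  finally have a: "\<bar>\<phi> (w y) - \<phi> y\<bar> \<le> G * q y * norm v" .
  have b: "\<bar>q y * A\<bar> \<le> q y * (G * norm v)" using abs_A_le q_bounds[of y] by (simp add: abs_mult mult_left_mono)
  have "\<bar>excess y\<bar> \<le> \<bar>\<phi> (w y) - \<phi> y\<bar> + \<bar>q y * A\<bar>"
    unfolding excess_def using abs_triangle_ineq4[of "\<phi> (w y) - \<phi> y" "q y * A"] by simp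
  then show ?thesis using a b by (simp add: algebra_simps)
qed

lemma abs_\<mu>_le_norm_v: assumes "norm (y - x) < \<rho>" shows "\<bar>\<mu> y\<bar> \<le> (4 * G / N2 + K * \<rho>\<^sup>2) * norm v"
proof -
  have k: "\<kappa> > 0" "\<kappa> \<ge> N2/2" using \<kappa>0 \<kappa>_ge by auto
  have "\<bar>excess y / \<kappa>\<bar> = \<bar>excess y\<bar> / \<kappa>" using k by simp
  also have "\<dots> \<le> (2 * G * norm v) / (N2/2)"
  proof (rule frac_le)
    show "\<bar>excess y\<bar> \<le> 2 * G * norm v"
      using abs_excess_le_bump[OF assms] q_bounds[of y] G0 by (smt (verit) mult_left_le_one_le mult_nonneg_nonneg norm_ge_zero mult.commute mult.left_commute)
  qed (use k N20 G0 in auto)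
  also have "\<dots> = 4 * G / N2 * norm v" by simp
  finally have t1: "\<bar>excess y / \<kappa>\<bar> \<le> 4 * G / N2 * norm v" .
  have t2: "\<bar>K * norm v * q y * ((y - x) \<bullet> (y - x))\<bar> \<le> K * norm v * 1 * \<rho>\<^sup>2"
  proof -
    have "\<bar>(y - x) \<bullet> (y - x)\<bar> \<le> \<rho>\<^sup>2" unfolding inner_self_diff using assms by (simp add: power_mono)
    then show ?thesis unfolding abs_mult using q_bounds[of y] K0 by (intro mult_mono) auto
  qed
  have "\<bar>\<mu> y\<bar> \<le> \<bar>excess y / \<kappa>\<bar> + \<bar>K * norm v * q y * ((y - x) \<bullet> (y - x))\<bar>"
    unfolding \<mu>_def by (rule abs_triangle_ineq)
  then show ?thesis using t1 t2 by (simp add: algebra_simps)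
qed

lemma norm_\<Phi>_minus_id_le: "norm (\<Phi> y - y) \<le> Cp * norm v"
proof (cases "norm (y - x) < \<rho>")
  case True
  have "norm (\<Phi> y - y) = norm (q y *\<^sub>R v - \<mu> y *\<^sub>R n)" by (simp add: \<Phi>_def w_def)
  also have "\<dots> \<le> \<bar>q y\<bar> * norm v + \<bar>\<mu> y\<bar> * nn"
    using norm_triangle_ineq4[of "q y *\<^sub>R v" "\<mu> y *\<^sub>R n"] by (simp add: n_def nn_def)
  also have "\<dots> \<le> 1 * norm v + ((4 * G / N2 + K * \<rho>\<^sup>2) * norm v) * nn"
    using q_bounds[of y] abs_\<mu>_le_norm_v[OF True] nn0 by (intro add_mono mult_right_mono) auto
  also have "\<dots> = Cp * norm v" by (simp add: Cp_def algebra_simps)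
  finally show ?thesis .
next
  case False
  then show ?thesis using \<Phi>_outside(2)[of y] Cp0 by simp
qed

lemma quad_dominates: assumes "0 \<le> d" "d \<le> \<rho>" "0 \<le> m2"
  shows "3 * Lc * nn * m2 * d \<le> m2 * \<kappa> / 2"
proof -
  have "3 * Lc * nn * d \<le> 3 * Lc * nn * \<rho>" using assms Lc1 nn0 by (intro mult_left_mono) auto
  also have "\<dots> \<le> \<kappa> / 2" using \<rho>n \<kappa>_ge by linarith
  finally have "3 * Lc * nn * d \<le> \<kappa> / 2" .
  then have "(3 * Lc * nn * d) * m2 \<le> (\<kappa> / 2) * m2" using assms by (intro mult_right_mono) auto
  then show ?thesis by (simp add: algebra_simps)
qed

lemma \<kappa>_sq_ge: "(N2/2)\<^sup>2 \<le> \<kappa>\<^sup>2" using \<kappa>_ge N20 by (intro power_mono) auto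

lemma excess_dominated_near: assumes "0 \<le> d" "1/4 \<le> qq" "\<bar>a\<bar> \<le> c1 * norm v * d"
  shows "3 * Lc * nn * \<bar>a / \<kappa>\<bar> * d \<le> K * norm v * qq * d\<^sup>2 * \<kappa> / 2"
proof -
  have k: "\<kappa> > 0" using \<kappa>0 .
  define Z where "Z = norm v * d\<^sup>2"
  have Z0: "Z \<ge> 0" using assms by (simp add: Z_def)
  have c: "24 * Lc * nn * c1 \<le> K * \<kappa>\<^sup>2"
  proof -
    have "24 * Lc * nn * c1 \<le> (N2/2)\<^sup>2 * K" by (rule K_dominates(1))
    also have "\<dots> \<le> \<kappa>\<^sup>2 * K" using \<kappa>_sq_ge K0 by (intro mult_right_mono) auto
    finally show ?thesis by (simp add: mult.commute)
  qed
  have "3 * Lc * nn * \<bar>a / \<kappa>\<bar> * d = (3 * Lc * nn / \<kappa>) * (\<bar>a\<bar> * d)" using k by (simp add: abs_divide)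
  also have "\<dots> \<le> (3 * Lc * nn / \<kappa>) * ((c1 * norm v * d) * d)"
    using assms Lc1 nn0 k by (intro mult_left_mono mult_right_mono) auto
  also have "\<dots> = (3 * Lc * nn * c1 / \<kappa>) * Z" by (simp add: Z_def power2_eq_square)
  also have "\<dots> \<le> (K * \<kappa> / 8) * Z"
  proof (rule mult_right_mono[OF _ Z0])
    show "3 * Lc * nn * c1 / \<kappa> \<le> K * \<kappa> / 8"
      using c k by (simp add: divide_simps power2_eq_square)
  qed
  also have "\<dots> \<le> K * norm v * qq * d\<^sup>2 * \<kappa> / 2"
  proof -
    have "(K * \<kappa> / 8) * Z = (K * \<kappa> * Z / 2) * (1/4)" by simp
    also have "\<dots> \<le> (K * \<kappa> * Z / 2) * qq" using assms K0 k Z0 by (intro mult_left_mono) auto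
    finally show ?thesis by (simp add: Z_def algebra_simps)
  qed
  finally show ?thesis .
qed

lemma excess_dominated_far: assumes "\<rho>/2 < d" "0 \<le> qq" "\<bar>a\<bar> \<le> 2 * G * qq * norm v"
  shows "3 * Lc * nn * \<bar>a / \<kappa>\<bar> * d \<le> K * norm v * qq * d\<^sup>2 * \<kappa> / 2"
proof -
  have k: "\<kappa> > 0" using \<kappa>0 .
  define Z where "Z = qq * norm v * d"
  have d0: "d > 0" using assms \<rho>0 by linarith
  have Z0: "Z \<ge> 0" using assms d0 by (simp add: Z_def)
  have c: "24 * Lc * nn * G \<le> K * \<kappa>\<^sup>2 * \<rho>"
  proof -
    have "24 * Lc * nn * G / \<rho> \<le> \<kappa>\<^sup>2 * K"
      using K_dominates(2) \<kappa>_sq_ge K0 by (meson mult_right_mono order_trans)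
    then show ?thesis using \<rho>0 by (simp add: divide_simps mult.commute mult.left_commute)
  qed
  have "3 * Lc * nn * \<bar>a / \<kappa>\<bar> * d = (3 * Lc * nn / \<kappa>) * (\<bar>a\<bar> * d)" using k by (simp add: abs_divide)
  also have "\<dots> \<le> (3 * Lc * nn / \<kappa>) * ((2 * G * qq * norm v) * d)"
    using assms Lc1 nn0 k d0 by (intro mult_left_mono mult_right_mono) auto
  also have "\<dots> = (6 * Lc * nn * G / \<kappa>) * Z" by (simp add: Z_def)
  also have "\<dots> \<le> (K * \<kappa> * \<rho> / 4) * Z"
  proof (rule mult_right_mono[OF _ Z0])
    show "6 * Lc * nn * G / \<kappa> \<le> K * \<kappa> * \<rho> / 4"
      using c k by (simp add: divide_simps power2_eq_square) (simp add: algebra_simps)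
  qed
  also have "\<dots> \<le> (K * \<kappa> * d / 2) * Z"
  proof (rule mult_right_mono[OF _ Z0])
    have "(K * \<kappa>) * (\<rho> / 4) \<le> (K * \<kappa>) * (d / 2)" by (rule mult_left_mono) (use assms K0 k in auto)
    then show "K * \<kappa> * \<rho> / 4 \<le> K * \<kappa> * d / 2" by simp
  qed
  also have "\<dots> = K * norm v * qq * d\<^sup>2 * \<kappa> / 2" by (simp add: Z_def power2_eq_square)
  finally show ?thesis .
qed

lemma \<mu>_eq: "\<mu> y = excess y / \<kappa> + quad y"
  by (simp add: \<mu>_def quad_def inner_self_diff)

lemma quad_nonneg: "quad y \<ge> 0"
  using K0 q_bounds by (simp add: quad_def)

lemma abs_\<mu>_le_split: "\<bar>\<mu> y\<bar> \<le> \<bar>excess y / \<kappa>\<bar> + quad y"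
  unfolding \<mu>_eq using abs_triangle_ineq[of "excess y / \<kappa>" "quad y"] quad_nonneg by simp

lemma correction_le:
  assumes near: "norm (y - x) < \<rho>"
  shows "\<bar>\<mu> y\<bar> * nn \<le> norm (y - x)"
proof -
  define d where "d = norm (y - x)"
  have d0: "0 \<le> d" and d\<rho>: "d < \<rho>" using near by (auto simp: d_def)
  have k: "\<kappa> > 0" "\<kappa> \<ge> N2/2" using \<kappa>0 \<kappa>_ge by auto
  have first: "\<bar>excess y / \<kappa>\<bar> \<le> (2 * c1 / N2) * norm v * d"
  proof -
    have "\<bar>excess y / \<kappa>\<bar> = \<bar>excess y\<bar> / \<kappa>" using k by simp
    also have "\<dots> \<le> (c1 * norm v * d) / (N2/2)"
      using abs_excess_le_dist[OF near] k N20 c1_0 d0 by (intro frac_le) (auto simp: d_def)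
    also have "\<dots> = (2 * c1 / N2) * norm v * d" by (simp add: field_simps)
    finally show ?thesis .
  qed
  have second: "quad y \<le> K * norm v * \<rho> * d"
  proof -
    have "quad y = (K * norm v) * (q y * d * d)" by (simp add: quad_def d_def power2_eq_square)
    also have "\<dots> \<le> (K * norm v) * (1 * \<rho> * d)"
      using q_bounds[of y] d0 d\<rho> K0 by (intro mult_left_mono mult_right_mono mult_mono) auto
    finally show ?thesis by simp
  qed
  have "\<bar>\<mu> y\<bar> \<le> ((2 * c1 / N2) + K * \<rho>) * norm v * d"
    using abs_\<mu>_le_split[of y] first second by (simp add: algebra_simps)
  then have "\<bar>\<mu> y\<bar> * nn \<le> (((2 * c1 / N2) + K * \<rho>) * norm v * d) * nn"
    using nn0 by (intro mult_right_mono) auto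
  also have "\<dots> = (((2 * c1 / N2) + K * \<rho>) * nn * norm v) * d" by (simp add: algebra_simps)
  also have "\<dots> \<le> 1 * d" using v_correction_small d0 by (intro mult_right_mono) auto
  finally show ?thesis by (simp add: d_def)
qed

lemma w_near_target:
  assumes near: "norm (y - x) < \<rho>"
  shows "norm (w y - (x + v)) \<le> 2 * norm (y - x)"
proof -
  have e: "w y - (x + v) = (y - x) - (1 - q y) *\<^sub>R v" by (simp add: w_def algebra_simps)
  have "(1 - q y) * norm v \<le> (2 / \<rho> * norm (y - x)) * (\<rho> / 4)"
    using one_minus_bump_le[OF \<rho>0, of x y] norm_v_le q_bounds[of y] by (intro mult_mono) (auto simp: q_def)
  also have "\<dots> = norm (y - x) / 2" using \<rho>0 by simp
  finally have "norm ((1 - q y) *\<^sub>R v) \<le> norm (y - x) / 2" using q_bounds[of y] by simp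
  then show ?thesis
    unfolding e using norm_triangle_ineq4[of "y - x" "(1 - q y) *\<^sub>R v"] norm_ge_zero[of "y - x"]
    by linarith
qed

lemma segment_near_target:
  assumes near: "norm (y - x) < \<rho>" and t: "t \<in> {0..1}"
  shows "norm (w y + t *\<^sub>R (\<Phi> y - w y) - (x + v)) \<le> 3 * norm (y - x)"
    and "w y + t *\<^sub>R (\<Phi> y - w y) \<in> cball x (r/2)"
proof -
  have "norm (t *\<^sub>R (\<Phi> y - w y)) = t * (\<bar>\<mu> y\<bar> * nn)"
    using t by (simp add: \<Phi>_def n_def nn_def abs_mult)
  also have "\<dots> \<le> \<bar>\<mu> y\<bar> * nn" by (rule mult_left_le_one_le) (use t nn0 in auto)
  finally have "norm (t *\<^sub>R (\<Phi> y - w y)) \<le> \<bar>\<mu> y\<bar> * nn" .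
  then show seg: "norm (w y + t *\<^sub>R (\<Phi> y - w y) - (x + v)) \<le> 3 * norm (y - x)"
    using norm_triangle_ineq[of "w y - (x + v)" "t *\<^sub>R (\<Phi> y - w y)"]
      w_near_target[OF near] correction_le[OF near]
    by (simp add: algebra_simps)
  have "norm (w y + t *\<^sub>R (\<Phi> y - w y) - x) \<le> norm (w y + t *\<^sub>R (\<Phi> y - w y) - (x + v)) + norm v"
    using norm_triangle_ineq[of "w y + t *\<^sub>R (\<Phi> y - w y) - (x + v)" v] by simp
  then have "norm (w y + t *\<^sub>R (\<Phi> y - w y) - x) \<le> r/2" using seg norm_v_le near \<rho>R \<rho>0 by linarith
  then show "w y + t *\<^sub>R (\<Phi> y - w y) \<in> cball x (r/2)" by (simp add: dist_norm norm_minus_commute)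
qed

lemma second_order_dominated:
  assumes near: "norm (y - x) < \<rho>"
  shows "3 * Lc * nn * \<bar>\<mu> y\<bar> * norm (y - x) \<le> quad y * \<kappa>"
proof -
  define d where "d = norm (y - x)"
  have d0: "0 \<le> d" and d\<rho>: "d < \<rho>" using near by (auto simp: d_def)
  have X: "3 * Lc * nn * quad y * d \<le> quad y * \<kappa> / 2"
    by (rule quad_dominates) (use d0 d\<rho> quad_nonneg in auto)
  have Y: "3 * Lc * nn * \<bar>excess y / \<kappa>\<bar> * d \<le> K * norm v * q y * d\<^sup>2 * \<kappa> / 2"
  proof (cases "q y \<ge> 1/4")
    case True
    then show ?thesis by (rule excess_dominated_near[OF d0 _ abs_excess_le_dist[OF near, folded d_def]])
  next
    case False
    then have "\<rho>/2 < d" using half_radius_lt_norm_if_bump_lt[OF \<rho>0, of x y] by (simp add: q_def d_def)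
    then show ?thesis by (rule excess_dominated_far[OF _ q_bounds(1) abs_excess_le_bump[OF near]])
  qed
  have "3 * Lc * nn * \<bar>\<mu> y\<bar> * d \<le> 3 * Lc * nn * (\<bar>excess y / \<kappa>\<bar> + quad y) * d"
    using abs_\<mu>_le_split[of y] Lc1 nn0 d0 by (intro mult_right_mono mult_left_mono) auto
  also have "\<dots> = 3 * Lc * nn * \<bar>excess y / \<kappa>\<bar> * d + 3 * Lc * nn * quad y * d"
    by (simp add: algebra_simps)
  also have "\<dots> \<le> quad y * \<kappa>" using X Y by (simp add: quad_def d_def)
  finally show ?thesis by (simp add: d_def)
qed

text \<open>Along the correction \<open>\<phi>\<close> drops by \<open>\<mu> y \<kappa>\<close> up to a second-order error: the part
  \<open>excess y / \<kappa>\<close> of \<open>\<mu> y\<close> cancels \<open>excess y\<close>, and \<open>quad y\<close> absorbs the error.\<close>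

lemma \<Phi>_closure:
  assumes yc: "y \<in> closure \<Omega>"
  shows "\<Phi> y \<in> closure \<Omega>"
proof (cases "norm (y - x) < \<rho>")
  case False
  then show ?thesis using \<Phi>_outside(2)[of y] yc by simp
next
  case near: True
  define d where "d = norm (y - x)"
  have yb: "y \<in> ball x r" using cball_if_near[OF near] cball_half_subset by blast
  have nPw: "norm (\<Phi> y - w y) = \<bar>\<mu> y\<bar> * nn" by (simp add: \<Phi>_def n_def nn_def)
  have "\<phi> (\<Phi> y) - \<phi> (w y) - grad (x + v) \<bullet> (\<Phi> y - w y) \<le> norm (\<Phi> y - w y) * (Lc * (3 * d))"
    using \<phi>_linearization_error_le[OF segment_near_target(2)[OF near] x_plus_v_cball
        segment_near_target(1)[OF near]] by (simp add: d_def)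
  moreover have "grad (x + v) \<bullet> (\<Phi> y - w y) = - (\<mu> y * \<kappa>)" by (simp add: \<Phi>_def \<kappa>_def)
  moreover have "\<phi> (w y) = \<phi> y + q y * A + excess y" by (simp add: excess_def)
  moreover have "excess y - \<mu> y * \<kappa> = - (quad y * \<kappa>)" using \<kappa>0 by (simp add: \<mu>_eq algebra_simps)
  moreover have "q y * A \<le> 0" using q_bounds[of y] A_nonpos by (simp add: mult_nonneg_nonpos)
  moreover have "\<phi> y \<le> 0" by (rule \<phi>_nonpos_if_closure[OF yc yb])
  ultimately have "\<phi> (\<Phi> y) \<le> 0"
    using second_order_dominated[OF near] unfolding nPw d_def by (simp add: algebra_simps)
  moreover have "\<Phi> y \<in> ball x r"
  proof -
    have "norm (\<Phi> y - x) \<le> norm (w y + 1 *\<^sub>R (\<Phi> y - w y) - (x + v)) + norm v"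
      using norm_triangle_ineq[of "w y + 1 *\<^sub>R (\<Phi> y - w y) - (x + v)" v] by simp
    also have "\<dots> \<le> 3 * d + \<rho>/4" using segment_near_target(1)[OF near, of 1] norm_v_le by (simp add: d_def)
    finally have "norm (\<Phi> y - x) < r" using near \<rho>R \<rho>0 by (simp add: d_def)
    then show ?thesis by (simp add: dist_norm norm_minus_commute)
  qed
  ultimately show ?thesis using closure_if_\<phi>_nonpos by blast
qed

end

section \<open>Transport maps preserving the closure\<close>

definition closure_transport ::
  "'a::euclidean_space set \<Rightarrow> 'a \<Rightarrow> 'a \<Rightarrow> real \<Rightarrow> ('a \<Rightarrow> 'a) \<Rightarrow> ('a \<Rightarrow> 'a \<Rightarrow> 'a) \<Rightarrow> bool" where
  "closure_transport \<Omega> x v C \<Phi> D \<longleftrightarrow>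
     \<Phi> x = x + v \<and> \<Phi> ` closure \<Omega> \<subseteq> closure \<Omega> \<and> (\<forall>y. (\<Phi> has_derivative D y) (at y)) \<and>
     (\<forall>y h. norm (D y h - h) \<le> C * norm v * norm h) \<and> (\<forall>y. norm (\<Phi> y - y) \<le> C * norm v)"

lemma (in boundary_transport) closure_transport_\<Phi>:
  "closure_transport \<Omega> x v (max Cd Cp) \<Phi> D\<Phi>"
  unfolding closure_transport_def
proof (intro conjI allI image_subsetI)
  show "\<Phi> x = x + v" by (rule \<Phi>_centre)
  show "\<Phi> y \<in> closure \<Omega>" if "y \<in> closure \<Omega>" for y using \<Phi>_closure that .
  show "(\<Phi> has_derivative D\<Phi> y) (at y)" for y by (rule \<Phi>_has_derivative)
  show "norm (D\<Phi> y h - h) \<le> max Cd Cp * norm v * norm h" for y h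
    using norm_D\<Phi>_minus_id_le[of y h] mult_right_mono[of Cd "max Cd Cp" "norm v * norm h"]
    by (simp add: mult.assoc)
  show "norm (\<Phi> y - y) \<le> max Cd Cp * norm v" for y
    using norm_\<Phi>_minus_id_le[of y] mult_right_mono[of Cp "max Cd Cp" "norm v"] by simp
qed

lemma (in bounded_Hessian_chart) closure_transport_exists_boundary:
  "\<exists>\<epsilon>>0. \<exists>C\<ge>0. \<forall>v. norm v < \<epsilon> \<longrightarrow> x + v \<in> closure \<Omega> \<longrightarrow> (\<exists>\<Phi> D. closure_transport \<Omega> x v C \<Phi> D)"
proof -
  have "\<exists>\<Phi> D. closure_transport \<Omega> x v (max Cd Cp) \<Phi> D" if "norm v < \<epsilon>" "x + v \<in> closure \<Omega>" for v
  proof -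
    interpret boundary_transport \<Omega> x r \<phi> grad H M v using that by unfold_locales
    show ?thesis using closure_transport_\<Phi> by blast
  qed
  moreover have "max Cd Cp \<ge> 0" using Cd0 by simp
  ultimately show ?thesis using \<epsilon>0 by blast
qed

lemma closure_transport_bump_translation:
  fixes \<Omega> :: "'a::euclidean_space set"
  assumes \<rho>: "\<rho> > 0" and ball: "ball x (2 * \<rho>) \<subseteq> \<Omega>" and v: "norm v < \<rho>"
  shows "closure_transport \<Omega> x v (4 / \<rho> + 1)
           (\<lambda>y. y + bump x \<rho> y *\<^sub>R v) (\<lambda>y h. h + bump_derivative x \<rho> y h *\<^sub>R v)"
  unfolding closure_transport_def
proof (intro conjI allI image_subsetI)
  show "x + bump x \<rho> x *\<^sub>R v = x + v" by (simp add: bump_centre)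
  have bump_v: "norm (bump x \<rho> y *\<^sub>R v) \<le> norm v" for y
    using bump_nonneg[of x \<rho> y] bump_le_one[of x \<rho> y] by (simp add: mult_left_le_one_le)
  show "y + bump x \<rho> y *\<^sub>R v \<in> closure \<Omega>" if y: "y \<in> closure \<Omega>" for y
  proof (cases "norm (y - x) < \<rho>")
    case True
    have "norm (y + bump x \<rho> y *\<^sub>R v - x) \<le> norm (y - x) + norm (bump x \<rho> y *\<^sub>R v)"
      using norm_triangle_ineq[of "y - x" "bump x \<rho> y *\<^sub>R v"] by (simp add: algebra_simps)
    then have "y + bump x \<rho> y *\<^sub>R v \<in> ball x (2 * \<rho>)"
      using True v bump_v[of y] by (simp add: dist_norm norm_minus_commute)
    then show ?thesis using ball closure_subset by blast
  next
    case False
    then show ?thesis using bump_outside[OF \<rho>, of y x] y by simp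
  qed
  show "((\<lambda>y. y + bump x \<rho> y *\<^sub>R v) has_derivative (\<lambda>h. h + bump_derivative x \<rho> y h *\<^sub>R v)) (at y)" for y
    by (rule has_derivative_add[OF has_derivative_ident has_derivative_scaleR_left[OF bump_has_derivative]])
  show "norm (h + bump_derivative x \<rho> y h *\<^sub>R v - h) \<le> (4 / \<rho> + 1) * norm v * norm h" for y h
  proof -
    have "norm (h + bump_derivative x \<rho> y h *\<^sub>R v - h) = \<bar>bump_derivative x \<rho> y h\<bar> * norm v" by simp
    also have "\<dots> \<le> (4 / \<rho> * norm h) * norm v"
      by (intro mult_right_mono abs_bump_derivative_le[OF \<rho>]) auto
    also have "\<dots> \<le> (4 / \<rho> + 1) * norm v * norm h" by (simp add: algebra_simps)
    finally show ?thesis .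
  qed
  show "norm (y + bump x \<rho> y *\<^sub>R v - y) \<le> (4 / \<rho> + 1) * norm v" for y
    using bump_v[of y] mult_right_mono[of 1 "4 / \<rho> + 1" "norm v"] \<rho> by simp
qed

lemma closure_transport_exists_interior:
  fixes \<Omega> :: "'a::euclidean_space set"
  assumes "open \<Omega>" "x \<in> \<Omega>"
  shows "\<exists>\<epsilon>>0. \<exists>C\<ge>0. \<forall>v. norm v < \<epsilon> \<longrightarrow> x + v \<in> closure \<Omega> \<longrightarrow> (\<exists>\<Phi> D. closure_transport \<Omega> x v C \<Phi> D)"
proof -
  obtain e where "e > 0" "ball x e \<subseteq> \<Omega>" using assms open_contains_ball by blast
  then have "ball x (2 * (e/2)) \<subseteq> \<Omega>" "e/2 > 0" by auto
  moreover have "4 / (e/2) + 1 \<ge> 0" using \<open>e > 0\<close> by simp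
  ultimately show ?thesis using closure_transport_bump_translation by blast
qed

lemma closure_transport_exists:
  fixes \<Omega> :: "'a::euclidean_space set"
  assumes "open \<Omega>" "C2_boundary \<Omega>" "x \<in> closure \<Omega>"
  shows "\<exists>\<epsilon>>0. \<exists>C\<ge>0. \<forall>v. norm v < \<epsilon> \<longrightarrow> x + v \<in> closure \<Omega> \<longrightarrow> (\<exists>\<Phi> D. closure_transport \<Omega> x v C \<Phi> D)"
proof (cases "x \<in> \<Omega>")
  case True
  then show ?thesis using closure_transport_exists_interior[OF assms(1) True] by blast
next
  case False
  have "x \<in> frontier \<Omega>" using assms False by (simp add: frontier_def interior_open)
  then obtain r \<phi> where r: "r > 0" and C2: "C2_on (ball x r) \<phi>"
    and nz: "\<forall>y\<in>ball x r. \<forall>D. (\<phi> has_derivative D) (at y) \<longrightarrow> D \<noteq> (\<lambda>h. 0)"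
    and \<Omega>_local: "\<Omega> \<inter> ball x r = {y\<in>ball x r. \<phi> y < 0}"
    using assms(2) unfolding C2_boundary_def by blast
  obtain grad :: "'a \<Rightarrow> 'a" and H where
    \<phi>_deriv: "\<forall>y\<in>ball x r. (\<phi> has_derivative (\<lambda>h. grad y \<bullet> h)) (at y)"
    and grad_deriv: "\<forall>y\<in>ball x r. (grad has_derivative H y) (at y)"
    and Hessian_cont: "\<forall>v. continuous_on (ball x r) (\<lambda>y. H y v)"
    using C2 unfolding C2_on_def by blast
  have "grad y \<noteq> 0" if "y \<in> ball x r" for y
    using nz \<phi>_deriv that by fastforce
  then interpret boundary_chart \<Omega> x r \<phi> grad H
    using r \<phi>_deriv grad_deriv Hessian_cont \<Omega>_local assms(3) False by unfold_locales auto
  obtain M where "M \<ge> 0" "\<forall>y\<in>cball x (r/2). \<forall>h. norm (H y h) \<le> M * norm h"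
    using Hessian_bounded by blast
  then interpret bounded_Hessian_chart \<Omega> x r \<phi> grad H M
    by unfold_locales auto
  show ?thesis by (rule closure_transport_exists_boundary)
qed

section \<open>Approximating curves\<close>

lemma closure_transport_sequence:
  fixes \<Omega> :: "'a::euclidean_space set"
  assumes "open \<Omega>" "C2_boundary \<Omega>" "\<forall>i. xs i \<in> closure \<Omega>" "xs \<longlonglongrightarrow> x"
  obtains F G c N where "c \<longlonglongrightarrow> 0"
    and "\<And>i. N \<le> i \<Longrightarrow> near_identity (F i) (G i) (c i) \<and> F i x = xs i \<and>
           F i ` closure \<Omega> \<subseteq> closure \<Omega> \<and> (\<forall>y. norm (F i y - y) \<le> c i)"
proof -
  have "x \<in> closure \<Omega>" using closed_sequentially[OF closed_closure] assms(3,4) by blast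
  then obtain \<epsilon> C where "\<epsilon> > 0" "C \<ge> 0" and transport: "\<And>v. norm v < \<epsilon> \<Longrightarrow> x + v \<in> closure \<Omega> \<Longrightarrow>
      \<exists>\<Phi> D. closure_transport \<Omega> x v C \<Phi> D"
    using closure_transport_exists[OF assms(1,2)] by blast
  have "\<forall>v. \<exists>p. norm v < \<epsilon> \<longrightarrow> x + v \<in> closure \<Omega> \<longrightarrow> closure_transport \<Omega> x v C (fst p) (snd p)"
    using transport by fastforce
  then obtain p where p: "\<And>v. norm v < \<epsilon> \<Longrightarrow> x + v \<in> closure \<Omega> \<Longrightarrow>
      closure_transport \<Omega> x v C (fst (p v)) (snd (p v))"
    by metis
  define c where "c i = C * norm (xs i - x)" for i
  have "c \<longlonglongrightarrow> C * norm (x - x)" unfolding c_def by (intro tendsto_intros assms(4))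
  then have c: "c \<longlonglongrightarrow> 0" by simp
  have "\<forall>\<^sub>F i in sequentially. norm (xs i - x) < \<epsilon>"
    using assms(4) \<open>\<epsilon> > 0\<close> by (simp add: tendsto_iff dist_norm)
  moreover have "\<forall>\<^sub>F i in sequentially. c i < 1/2" using c by (rule order_tendstoD) simp
  ultimately have "\<forall>\<^sub>F i in sequentially. norm (xs i - x) < \<epsilon> \<and> c i < 1/2"
    by (rule eventually_conj)
  then obtain N where N: "\<And>i. N \<le> i \<Longrightarrow> norm (xs i - x) < \<epsilon> \<and> c i < 1/2"
    by (auto simp: eventually_sequentially)
  define F where "F i = fst (p (xs i - x))" for i
  define G where "G i = snd (p (xs i - x))" for i
  have transports: "near_identity (F i) (G i) (c i) \<and> F i x = xs i \<and>
      F i ` closure \<Omega> \<subseteq> closure \<Omega> \<and> (\<forall>y. norm (F i y - y) \<le> c i)"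
    if "N \<le> i" for i
  proof -
    have "closure_transport \<Omega> x (xs i - x) C (F i) (G i)"
      unfolding F_def G_def using p N[OF that] assms(3) by simp
    moreover have "c i \<ge> 0" using \<open>C \<ge> 0\<close> by (simp add: c_def)
    ultimately show ?thesis
      using N[OF that] unfolding closure_transport_def near_identity_def c_def
      by (simp add: mult.assoc)
  qed
  show ?thesis by (rule that[OF c transports])
qed

lemma near_identity_curves_converge:
  fixes \<gamma> :: "real \<Rightarrow> 'a::euclidean_space"
  assumes c: "c \<longlonglongrightarrow> 0"
    and F: "\<And>i. N \<le> i \<Longrightarrow> near_identity (F i) (G i) (c i) \<and> (\<forall>y. norm (F i y - y) \<le> c i) \<and> \<gamma>s i = F i \<circ> \<gamma>"
  shows "uniform_limit S \<gamma>s \<gamma> sequentially"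
    and "(\<lambda>i. vector_derivative (\<gamma>s i) (at t)) \<longlonglongrightarrow> vector_derivative \<gamma> (at t)"
proof (rule uniform_limitI)
  fix e :: real assume "e > 0"
  show "\<forall>\<^sub>F i in sequentially. \<forall>t\<in>S. dist (\<gamma>s i t) (\<gamma> t) < e"
    using eventually_ge_at_top[of N] order_tendstoD(2)[OF c \<open>e > 0\<close>]
  proof eventually_elim
    case (elim i)
    have "dist (\<gamma>s i t) (\<gamma> t) \<le> c i" for t using F[OF elim(1)] by (simp add: dist_norm)
    then show ?case using elim(2) order_le_less_trans by blast
  qed
next
  show "(\<lambda>i. vector_derivative (\<gamma>s i) (at t)) \<longlonglongrightarrow> vector_derivative \<gamma> (at t)"
  proof (rule LIM_zero_cancel, rule Lim_null_comparison)
    show "\<forall>\<^sub>F i in sequentially. norm (vector_derivative (\<gamma>s i) (at t) - vector_derivative \<gamma> (at t))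
        \<le> c i * norm (vector_derivative \<gamma> (at t))"
      using eventually_ge_at_top[of N]
    proof eventually_elim
      case (elim i)
      then interpret near_identity "F i" "G i" "c i" using F by blast
      show ?case using norm_vector_derivative_compose_diff_le[of \<gamma> t] F[OF elim] by simp
    qed
    show "(\<lambda>i. c i * norm (vector_derivative \<gamma> (at t))) \<longlonglongrightarrow> 0"
      using tendsto_mult_left_zero[OF c] .
  qed
qed

theorem proposition3p1:
  fixes \<Omega> :: "'a::euclidean_space set" and T :: real
    and xs :: "nat \<Rightarrow> 'a" and x :: 'a and \<gamma> :: "real \<Rightarrow> 'a"
  assumes "T > 0"
    and "open \<Omega>" and "bounded \<Omega>" and "C2_boundary \<Omega>"
    and "\<forall>i. xs i \<in> closure \<Omega>" and "xs \<longlonglongrightarrow> x"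
    and "\<gamma> \<in> Gamma T \<Omega>" and "\<gamma> 0 = x"
  shows "\<exists>\<gamma>s :: nat \<Rightarrow> real \<Rightarrow> 'a.
           (\<forall>i. \<gamma>s i \<in> Gamma T \<Omega> \<and> \<gamma>s i 0 = xs i) \<and>
           uniform_limit {0..T} \<gamma>s \<gamma> sequentially \<and>
           (AE t in lebesgue_on {0..T}.
              (\<lambda>i. vector_derivative (\<gamma>s i) (at t)) \<longlonglongrightarrow> vector_derivative \<gamma> (at t)) \<and>
           (\<exists>C\<ge>0. \<forall>i. AE t in lebesgue_on {0..T}.
              norm (vector_derivative (\<gamma>s i) (at t)) \<le> C * norm (vector_derivative \<gamma> (at t)))"
proof -
  obtain F G c N where c: "c \<longlonglongrightarrow> 0"
    and F: "\<And>i. N \<le> i \<Longrightarrow> near_identity (F i) (G i) (c i) \<and> F i x = xs i \<and>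
           F i ` closure \<Omega> \<subseteq> closure \<Omega> \<and> (\<forall>y. norm (F i y - y) \<le> c i)"
    by (rule closure_transport_sequence[OF assms(2,4,5,6)]) blast
  \<comment> \<open>The finitely many \<open>xs i\<close> out of reach get constant curves.\<close>
  define \<gamma>s where "\<gamma>s i = (if N \<le> i then F i \<circ> \<gamma> else (\<lambda>t. xs i))" for i
  have curves: "\<gamma>s i \<in> Gamma T \<Omega> \<and> \<gamma>s i 0 = xs i" for i
  proof (cases "N \<le> i")
    case True
    then interpret near_identity "F i" "G i" "c i" using F by blast
    show ?thesis using True F[OF True] Gamma_compose[OF assms(7)] assms(8) by (simp add: \<gamma>s_def)
  qed (use assms(5) in \<open>simp add: \<gamma>s_def Gamma_def absolutely_continuous_on_interval_const\<close>)
  have "N \<le> i \<Longrightarrow> near_identity (F i) (G i) (c i) \<and> (\<forall>y. norm (F i y - y) \<le> c i) \<and> \<gamma>s i = F i \<circ> \<gamma>"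
    for i using F by (simp add: \<gamma>s_def)
  note converge = near_identity_curves_converge[OF c this]
  have derivatives: "AE t in lebesgue_on {0..T}.
      (\<lambda>i. vector_derivative (\<gamma>s i) (at t)) \<longlonglongrightarrow> vector_derivative \<gamma> (at t)"
    using converge(2) by simp
  have bound: "norm (vector_derivative (\<gamma>s i) (at t)) \<le> 2 * norm (vector_derivative \<gamma> (at t))" for i t
  proof (cases "N \<le> i")
    case True
    then interpret near_identity "F i" "G i" "c i" using F by blast
    have "(1 + c i) * norm (vector_derivative \<gamma> (at t)) \<le> 2 * norm (vector_derivative \<gamma> (at t))"
      using small by (intro mult_right_mono) auto
    then show ?thesis using norm_vector_derivative_compose_le[of \<gamma> t] True by (simp add: \<gamma>s_def)
  qed (simp add: \<gamma>s_def)
  then have bounds: "\<exists>C\<ge>0. \<forall>i. AE t in lebesgue_on {0..T}.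
      norm (vector_derivative (\<gamma>s i) (at t)) \<le> C * norm (vector_derivative \<gamma> (at t))"
    by (intro exI[of _ 2]) simp
  show ?thesis using curves converge(1) derivatives bounds by blast
qed

end
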